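(* Consider the discrete-time linear controller $x(t+1)=Fx(t)+Gy(t)$, $u(t)=Hx(t)$, $x(0)=x^{\mathrm{ini}}$, with $F\in\mathbb{Z}^{n\times n}$, $G\in\mathbb{Q}^{n\times p}$, $H\in\mathbb{Q}^{m\times n}$, $x^{\mathrm{ini}}\in\mathbb{Q}^n$ and inputs $y(t)\in\mathbb{Q}^p$ for all $t\ge 0$. Let $\bar F=TFT^{-1}=\mathrm{diag}(C_0,\dots,C_{\kappa-1})$ be the rational canonical form of $F$ with $T\in\mathbb{Q}^{n\times n}$ nonsingular, and let $L,s_1,s_2$ be scale factors with $1/L,1/s_1,1/s_2\in\mathbb{N}$ such that $\bar G:=TG/s_1\in\mathbb{Z}^{n\times p}$, $\bar H:=HT^{-1}/s_2\in\mathbb{Z}^{m\times n}$, $z^{\mathrm{ini}}:=Tx^{\mathrm{ini}}/(Ls_1)\in\mathbb{Z}^n$ and $\bar y(t):=y(t)/L\in\mathbb{Z}^p$ for all $t\ge0$. Let $q$ be a prime, $N$ a power of two, $n$ a power of two with $N/n\in\mathbb{N}$, assume $np\le N$, and let $\tau=2^{\lceil\log_2 m\rceil}$ with $\tau\le N/n$. Define the reformulated controller over $R_q$: $$\tilde z(t+1)=\sum_{i=0}^{\kappa-1}\tilde F_i\cdot\tilde z_{r_i}(t)+X^{-N/n}\cdot\tilde z(t)+\tilde G\cdot\tilde y(t),\qquad \tilde u(t)=\tilde H\cdot \mathrm{Slot}_n(\tilde z(t)),\qquad \tilde z(0)=\mathrm{Pack}(z^{\mathrm{ini}}),$$ where $\tilde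 z_{r_i}(t):=\mathrm{Slot}_1(X^{-r_iN/n}\cdot\tilde z(t))\in\mathbb{Z}_q$, and its output $u'(t):=(Ls_1s_2)\cdot\mathrm{Unpack}(\tilde u(t))$. If $$\sup_{t\ge0}\max\left\{\left\|\frac{Tx(t)}{Ls_1}\right\|,\ \left\|\frac{u(t)}{Ls_1s_2}\right\|\right\}<\frac q2,$$ then $u'(t)=u(t)$ for all $t\ge0$.
   Context: Companion matrix: a $d\times d$ matrix with arbitrary first column, entries $1$ at positions $(i,i+1)$, $i=1,\dots,d-1$, and zeros elsewhere. The rational canonical form of $F$ is the unique matrix $\mathrm{diag}(C_0,\dots,C_{\kappa-1})$ similar to $F$ over $\mathbb{Q}$ with each $C_i$ a companion matrix and $\det(sI-C_i)\mid\det(sI-C_{i+1})$; for integer $F$ it is an integer matrix. $\|\cdot\|$ is the infinity norm (for polynomials, the maximum absolute coefficient). $\mathbb{Z}_q:=\mathbb{Z}\cap[-q/2,q/2)$ and $a \bmod q:=a-\lfloor (a+q/2)/q\rfloor q$ (applied entrywise/coefficientwise). $R_q:=\mathbb{Z}_q[X]/\langle X^N+1\rangle$: polynomials of degree $<N$ with coefficients in $\mathbb{Z}_q$, with addition and multiplication being usual polynomial operations followed by reduction using $X^N=-1$ and coefficientwise $\bmod\ q$; $X^{-k}$ denotes the inverse of $X^k$ in $R_q$ (namely $-X^{N-k}$ for $0<k\le N$). For $a\in\mathbb{Z}^n$, $\mathrm{Pack}(a):=\sum_{i=0}^{n-1}(a_i\bmod q)X^{iN/n}$. For a power of two $\alpha$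 and $\mathrm{a}=\sum_{i=0}^{N-1}\mathrm{a}_iX^i$, $\mathrm{Slot}_\alpha(\mathrm{a}):=\sum_{i=0}^{\alpha-1}\mathrm{a}_{iN/\alpha}X^{iN/\alpha}$ (so $\mathrm{Slot}_1$ gives the constant term). $\mathrm{Unpack}(\mathrm{a}):=[\mathrm{a}_0,\mathrm{a}_{N/(n\tau)},\dots,\mathrm{a}_{(m-1)N/(n\tau)}]^\top\in\mathbb{Z}_q^m$. Let $S\in\mathbb{Z}^{n\times n}$ have entries $S_{i,i+1}=1$ for $i=1,\dots,n-1$, $S_{n,1}=-1$, and zeros elsewhere. Let $r_0=0$ and $r_i$ be the sum of the sizes of $C_0,\dots,C_{i-1}$ (the 0-based column index where block $C_i$ starts), and let $\bar F'_i\in\mathbb{Z}^n$ be the $(r_i+1)$-th column of $\bar F-S$; $\tilde F_i:=\mathrm{Pack}(\bar F'_i)$. With $\bar G=(\bar G_{i,j})$: $\tilde G_i:=\sum_{j=0}^{p-1}\bar G_{i,j}X^{-j}\bmod q$ and $\tilde G:=\sum_{i=0}^{n-1}\tilde G_i\cdot X^{iN/n}$. With $\bar y(t)=[\bar y_0(t),\dots,\bar y_{p-1}(t)]^\top$: $\tilde y(t):=\sum_{j=0}^{p-1}\bar y_j(t)X^j\bmod q$. With $\bar H=(\bar H_{i,j})$: $\tilde H_i:=\sum_{j=0}^{n-1}\bar H_{i,j}X^{-jN/n}\bmod q$ and $\tilde H:=\sum_{i=0}^{m-1}\tilde H_i\cdot X^{iN/(n\tau)}$. Matrix/row/column indices of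 $\bar G,\bar H$ are 0-based. *)

theory Defs
  imports Complex_Main "Jordan_Normal_Form.Char_Poly" "HOL-Library.Extended_Real"
begin

definition companion_mat :: "'a :: zero_neq_one mat \<Rightarrow> nat \<Rightarrow> bool" where
  "companion_mat C d \<longleftrightarrow> C \<in> carrier_mat d d \<and>
     (\<forall>i<d. \<forall>j<d. j \<noteq> 0 \<longrightarrow> C $$ (i, j) = (if j = i + 1 then 1 else 0))"

definition rcf_blocks :: "rat mat \<Rightarrow> rat mat list \<Rightarrow> bool" where
  "rcf_blocks Fb Cs \<longleftrightarrow> Fb = diag_block_mat Cs \<and>
     (\<forall>C\<in>set Cs. 0 < dim_row C \<and> companion_mat C (dim_row C)) \<and>
     (\<forall>i. Suc i < length Cs \<longrightarrow> char_poly (Cs ! i) dvd char_poly (Cs ! Suc i))"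

text \<open>r_i: 0-based start column of block C_i.\<close>
definition block_start :: "rat mat list \<Rightarrow> nat \<Rightarrow> nat" where
  "block_start Cs i = sum_list (map dim_row (take i Cs))"

definition S_mat :: "nat \<Rightarrow> rat mat" where
  "S_mat n = mat n n (\<lambda>(i, j). if Suc i < n \<and> j = Suc i then 1
                               else if i = n - 1 \<and> j = 0 then -1 else 0)"

definition vnorm_inf :: "rat vec \<Rightarrow> rat" where
  "vnorm_inf v = Max (insert 0 {\<bar>v $ i\<bar> | i. i < dim_vec v})"

definition cmod :: "int \<Rightarrow> int \<Rightarrow> int" where
  "cmod q a = a - \<lfloor>(rat_of_int a + rat_of_int q / 2) / rat_of_int q\<rfloor> * q"

text \<open>Elements of R_q are coefficient functions (coefficient of X^i), zero for i \<ge> N.\<close>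
type_synonym rq = "nat \<Rightarrow> int"

definition radd :: "nat \<Rightarrow> int \<Rightarrow> rq \<Rightarrow> rq \<Rightarrow> rq" where
  "radd N q a b = (\<lambda>k. if k < N then cmod q (a k + b k) else 0)"

text \<open>Multiplication: usual product, reduction with X^N = -1, then coefficientwise mod q.\<close>
definition rmul :: "nat \<Rightarrow> int \<Rightarrow> rq \<Rightarrow> rq \<Rightarrow> rq" where
  "rmul N q a b = (\<lambda>k. if k < N then cmod q
      (\<Sum>i<N. \<Sum>j<N. if i + j = k then a i * b j
                      else if i + j = k + N then - (a i * b j) else 0) else 0)"

definition rsum :: "nat \<Rightarrow> int \<Rightarrow> (nat \<Rightarrow> rq) \<Rightarrow> nat set \<Rightarrow> rq" where
  "rsum N q f I = (\<lambda>k. if k < N then cmod q (\<Sum>i\<in>I. f i k) else 0)"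

definition rconst :: "nat \<Rightarrow> int \<Rightarrow> int \<Rightarrow> rq" where
  "rconst N q c = (\<lambda>k. if k = 0 \<and> 0 < N then cmod q c else 0)"

text \<open>X^j in R_q for any integer j (so X^{-k} is the inverse of X^k); uses X^N = -1.\<close>
definition Xpow :: "nat \<Rightarrow> int \<Rightarrow> int \<Rightarrow> rq" where
  "Xpow N q j = (\<lambda>k. if k = nat (j mod int N)
                     then cmod q (if even (j div int N) then 1 else -1) else 0)"

definition Pack :: "nat \<Rightarrow> nat \<Rightarrow> int \<Rightarrow> int vec \<Rightarrow> rq" where
  "Pack N n q a = rsum N q (\<lambda>i. rmul N q (rconst N q (a $ i)) (Xpow N q (int (i * N div n)))) {..<n}"

definition Slot :: "nat \<Rightarrow> nat \<Rightarrow> rq \<Rightarrow> rq" where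
  "Slot N \<alpha> a = (\<lambda>k. if k < N \<and> (\<exists>i<\<alpha>. k = i * N div \<alpha>) then a k else 0)"

definition Unpack :: "nat \<Rightarrow> nat \<Rightarrow> nat \<Rightarrow> nat \<Rightarrow> rq \<Rightarrow> int vec" where
  "Unpack N n \<tau> m a = vec m (\<lambda>i. a (i * N div (n * \<tau>)))"

end

theory Submission
  imports Defs
begin

text \<open>Since \<open>F\<close> is an integer matrix, the characteristic polynomial of \<open>Fbar\<close> is monic with
  integer coefficients; by Gauss's lemma so is that of every companion block, whose first column
  consists of its negated coefficients. Hence \<open>Fbar\<close> is an integer matrix and
  \<open>z(t) = T x(t) / (L s1)\<close> is an integer trajectory of \<open>z(t+1) = Fbar z(t) + Gbar ybar(t)\<close>.
  Packing \<open>z(t)\<close> into the coefficients of \<open>X^(l N/n)\<close>, multiplication by \<open>X^(-N/n)\<close> applies the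
  negacyclic shift \<open>S\<close>, and the products \<open>Ft_i \<cdot> z_(r_i)\<close> add the block-start columns of
  \<open>Fbar - S\<close>, which are its only nonzero columns; so the slots of \<open>zt(t)\<close> stay congruent to
  \<open>z(t)\<close> modulo \<open>q\<close>. The coefficient of \<open>Ht \<cdot> Slot_n(zt(t))\<close> at \<open>X^(l N/(n \<tau>))\<close> is then
  congruent to \<open>(Hbar z(t))_l = u_l(t) / (L s1 s2)\<close>, and since this integer lies in \<open>[-q/2, q/2)\<close>
  the centred reduction returns it exactly.\<close>

section \<open>Companion matrices and the rational canonical form\<close>

lemma rat_poly_int_multiple:
  fixes p :: "rat poly"
  shows "\<exists>(a::int) P. a > 0 \<and> map_poly of_int P = Polynomial.smult (of_int a) p"
proof -
  define a where "a = (\<Prod>i\<le>degree p. snd (quotient_of (coeff p i)))"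
  have a0: "a > 0" unfolding a_def by (intro prod_pos) (simp add: quotient_of_denom_pos')
  have int: "of_int a * coeff p i \<in> \<int>" for i
  proof (cases "i \<le> degree p")
    case True
    obtain x y where xy: "quotient_of (coeff p i) = (x, y)" by force
    have "coeff p i = of_int x / of_int y" using xy by (simp add: quotient_of_div)
    have y0: "y > 0" using xy quotient_of_denom_pos by blast
    have "a = y * (\<Prod>j\<in>{..degree p} - {i}. snd (quotient_of (coeff p j)))"
      unfolding a_def using True xy by (subst prod.remove[of _ i]) auto
    then have "of_int a * coeff p i = of_int (x * (\<Prod>j\<in>{..degree p} - {i}. snd (quotient_of (coeff p j))))"
      using \<open>coeff p i = of_int x / of_int y\<close> y0 by simp
    then show ?thesis by (metis Ints_of_int)
  next
    case False
    then show ?thesis by (simp add: coeff_eq_0)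
  qed
  define P where "P = map_poly (\<lambda>x. \<lfloor>x\<rfloor>) (Polynomial.smult (of_int a) p)"
  have "map_poly of_int P = Polynomial.smult (of_int a) p"
  proof (rule poly_eqI)
    fix i
    show "coeff (map_poly of_int P) i = coeff (Polynomial.smult (of_int a) p) i"
      unfolding P_def using int[of i] by (simp add: coeff_map_poly)
  qed
  with a0 show ?thesis by blast
qed

lemma content_nonneg_int: "content (p :: int poly) \<ge> 0"
  by (metis normalize_content abs_ge_zero normalize_int_def)

lemma content_monic_int: "monic (f :: int poly) \<Longrightarrow> content f = 1"
  using content_dvd_coeff[of f "degree f"] content_nonneg_int[of f] by simp

lemma eq_of_dvd_of_mult_eq:
  fixes x y a b :: int
  assumes "x dvd a" "y dvd b" "x * y = a * b" "0 \<le> x" "0 \<le> y" "0 < a" "0 < b"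
  shows "x = a"
proof -
  have "x \<le> a" "y \<le> b" using assms by (simp_all add: zdvd_imp_le)
  moreover have "\<not> x < a"
  proof
    assume "x < a"
    have "x * y \<le> x * b" using \<open>y \<le> b\<close> assms(4) by (rule mult_left_mono)
    also have "\<dots> < a * b" using \<open>x < a\<close> assms(7) by (rule mult_strict_right_mono)
    finally show False using assms(3) by simp
  qed
  ultimately show ?thesis by simp
qed

text \<open>Gauss's lemma: after clearing denominators, \<open>a p\<close> and \<open>b g\<close> are integer polynomials whose
  contents multiply to \<open>a b\<close>; since a content divides the leading coefficient, the content of
  \<open>a p\<close> is \<open>a\<close>.\<close>
lemma monic_dvd_int_poly_coeff_Ints:
  fixes p :: "rat poly" and f :: "int poly"
  assumes p: "monic p" and f: "monic f" and dvd: "p dvd map_poly of_int f"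
  shows "coeff p i \<in> \<int>"
proof -
  obtain g where fg: "map_poly of_int f = p * g" using dvd by (elim dvdE)
  have "lead_coeff (map_poly of_int f :: rat poly) = 1" using f by simp
  then have g: "monic g" using p unfolding fg by (simp add: lead_coeff_mult)
  obtain a P where a: "a > 0" and P: "map_poly of_int P = Polynomial.smult (of_int a) p"
    using rat_poly_int_multiple by blast
  obtain b G where b: "b > 0" and G: "map_poly of_int G = Polynomial.smult (of_int b) g"
    using rat_poly_int_multiple by blast
  have "map_poly of_int (P * G) = (map_poly of_int (Polynomial.smult (a * b) f) :: rat poly)"
    by (simp add: of_int_poly_hom.hom_mult P G fg hom_distribs ac_simps)
  then have "P * G = Polynomial.smult (a * b) f" by (rule of_int_poly_hom.injectivity)
  from arg_cong[OF this, of content] have "content P * content G = a * b"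
    using a b by (simp add: content_mult content_smult content_monic_int[OF f])
  moreover have "coeff P (degree p) = a" and "coeff G (degree g) = b"
    using arg_cong[OF P, of "\<lambda>x. coeff x (degree p)"] arg_cong[OF G, of "\<lambda>x. coeff x (degree g)"] p g
    by (simp_all add: coeff_map_poly)
  ultimately have "content P = a"
    by (intro eq_of_dvd_of_mult_eq[of _ a "content G" b])
      (use a b content_nonneg_int in \<open>auto intro: content_dvd_coeff[THEN dvd_trans] simp: content_dvd_coeff\<close>)
  then have "a dvd coeff P i" using content_dvd_coeff[of P i] by simp
  then obtain k where k: "coeff P i = a * k" by (elim dvdE)
  have "of_int (coeff P i) = (of_int a * coeff p i :: rat)"
    using arg_cong[OF P, of "\<lambda>x. coeff x i"] by (simp add: coeff_map_poly)
  then have "coeff p i = of_int k" using a unfolding k by simp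
  then show ?thesis by simp
qed

lemma det_lower_triangular_const_diag:
  assumes A: "A \<in> carrier_mat n n"
    and upper: "\<And>i j. i < j \<Longrightarrow> j < n \<Longrightarrow> A $$ (i, j) = 0"
    and diag: "\<And>i. i < n \<Longrightarrow> A $$ (i, i) = c"
  shows "det A = c ^ n"
proof -
  have "det A = prod_list (diag_mat A)" by (rule det_lower_triangular[OF upper A])
  also have "diag_mat A = replicate n c"
    using A diag by (intro nth_equalityI) (simp_all add: diag_mat_def)
  finally show ?thesis by simp
qed

lemma cofactor_shifted_companion_last_row:
  fixes M :: "'a::comm_ring_1 mat"
  assumes M: "M \<in> carrier_mat (Suc (Suc d)) (Suc (Suc d))"
    and pattern: "\<And>i j. i < Suc (Suc d) \<Longrightarrow> j < Suc (Suc d) \<Longrightarrow> j \<noteq> 0 \<Longrightarrow>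
           M $$ (i,j) = (if i = j then s else if j = i + 1 then -1 else 0)"
  shows "cofactor M (Suc d) 0 = 1"
proof -
  have "det (mat_delete M (Suc d) 0) = (-1) ^ Suc d"
  proof (rule det_lower_triangular_const_diag)
    show "mat_delete M (Suc d) 0 \<in> carrier_mat (Suc d) (Suc d)" using M by (auto simp: mat_delete_def)
    show "mat_delete M (Suc d) 0 $$ (i, j) = 0" if "i < j" "j < Suc d" for i j
      using that M pattern[of i "Suc j"] by (auto simp: mat_delete_def)
    show "mat_delete M (Suc d) 0 $$ (i, i) = -1" if "i < Suc d" for i
      using that M pattern[of i "Suc i"] by (auto simp: mat_delete_def)
  qed
  then show ?thesis unfolding cofactor_def by simp
qed

lemma det_shifted_companion:
  fixes M :: "'a::comm_ring_1 mat"
  assumes "M \<in> carrier_mat (Suc d) (Suc d)"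
    and "\<And>i j. i < Suc d \<Longrightarrow> j < Suc d \<Longrightarrow> j \<noteq> 0 \<Longrightarrow>
           M $$ (i,j) = (if i = j then s else if j = i + 1 then -1 else 0)"
  shows "det M = (\<Sum>i\<le>d. M $$ (i,0) * s ^ (d - i))"
  using assms
proof (induction d arbitrary: M)
  case 0
  have "det M = (\<Sum>j<1. M $$ (0,j) * cofactor M 0 j)"
    by (rule laplace_expansion_row) (use 0 in auto)
  also have "\<dots> = M $$ (0,0) * cofactor M 0 0" by simp
  also have "cofactor M 0 0 = 1" unfolding cofactor_def
    using 0 by (simp add: det_def mat_delete_def)
  finally show ?case by simp
next
  case (Suc d)
  let ?n = "Suc (Suc d)"
  have M: "M \<in> carrier_mat ?n ?n" using Suc.prems by simp
  have "det M = (\<Sum>j<?n. M $$ (Suc d,j) * cofactor M (Suc d) j)"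
    by (rule laplace_expansion_row[OF M]) simp
  also have "\<dots> = M $$ (Suc d, 0) * cofactor M (Suc d) 0 + (M $$ (Suc d, Suc d) * cofactor M (Suc d) (Suc d)
     + (\<Sum>j<d. M $$ (Suc d, Suc j) * cofactor M (Suc d) (Suc j)))"
  proof -
    define g where "g = (\<lambda>j. M $$ (Suc d,j) * cofactor M (Suc d) j)"
    have "(\<Sum>j<?n. g j) = g 0 + (\<Sum>j<Suc d. g (Suc j))" by (rule sum.lessThan_Suc_shift)
    also have "(\<Sum>j<Suc d. g (Suc j)) = (\<Sum>j<d. g (Suc j)) + g (Suc d)" by (rule sum.lessThan_Suc)
    finally show ?thesis unfolding g_def by (simp add: algebra_simps)
  qed
  also have "(\<Sum>j<d. M $$ (Suc d, Suc j) * cofactor M (Suc d) (Suc j)) = 0"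
    by (intro sum.neutral) (auto simp: Suc.prems)
  also have "M $$ (Suc d, Suc d) = s" using Suc.prems by simp
  also have "cofactor M (Suc d) (Suc d) = (\<Sum>i\<le>d. M $$ (i,0) * s ^ (d - i))"
  proof -
    have "det (mat_delete M (Suc d) (Suc d)) = (\<Sum>i\<le>d. mat_delete M (Suc d) (Suc d) $$ (i,0) * s ^ (d - i))"
      by (rule Suc.IH) (use M Suc.prems in \<open>auto simp: mat_delete_def\<close>)
    also have "\<dots> = (\<Sum>i\<le>d. M $$ (i,0) * s ^ (d - i))"
      using M by (intro sum.cong refl) (auto simp: mat_delete_def)
    finally show ?thesis unfolding cofactor_def by simp
  qed
  also have "cofactor M (Suc d) 0 = 1" by (rule cofactor_shifted_companion_last_row[OF M Suc.prems(2)])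
  moreover have "(\<Sum>i\<le>d. s * (M $$ (i, 0) * s ^ (d - i))) = (\<Sum>i\<le>d. M $$ (i, 0) * s ^ (Suc d - i))"
    by (intro sum.cong refl) (simp add: Suc_diff_le)
  ultimately show ?case by (simp add: sum.atMost_Suc sum_distrib_left)
qed

lemma coeff_char_poly_companion:
  assumes C: "companion_mat C d" and d: "0 < d" and i: "i < d"
  shows "coeff (char_poly C) (d - 1 - i) = - C $$ (i,0)"
proof -
  obtain d' where dd: "d = Suc d'" using d by (cases d) auto
  have Cc: "C \<in> carrier_mat d d" using C unfolding companion_mat_def by simp
  have Cj: "C $$ (i,j) = (if j = i + 1 then 1 else 0)" if "i < d" "j < d" "j \<noteq> 0" for i j
    using C that unfolding companion_mat_def by simp
  let ?x = "[:0,1:] :: 'a poly"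
  let ?M = "char_poly_matrix C"
  have m1: "[:-1:] = (-1 :: 'a poly)" by (simp add: one_pCons minus_pCons)
  have M: "?M \<in> carrier_mat (Suc d') (Suc d')" using Cc dd by simp
  have Mij: "?M $$ (i,j) = (if i = j then ?x else 0) + [:- C $$ (i,j):]" if "i < d" "j < d" for i j
    using that Cc unfolding char_poly_matrix_def by simp
  have "char_poly C = (\<Sum>i\<le>d'. ?M $$ (i,0) * ?x ^ (d' - i))"
    unfolding char_poly_def
  proof (rule det_shifted_companion[OF M])
    fix i j assume "i < Suc d'" "j < Suc d'" "j \<noteq> 0"
    then show "?M $$ (i,j) = (if i = j then ?x else if j = i + 1 then -1 else 0)"
      using Mij[of i j] Cj[of i j] dd m1 by auto
  qed
  also have "\<dots> = (\<Sum>i\<le>d'. (if i = 0 then ?x else 0) * ?x ^ (d' - i) + monom (- C $$ (i,0)) (d' - i))"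
    using dd by (intro sum.cong refl) (simp add: Mij distrib_right monom_altdef smult_conv_map_poly[symmetric] del: pCons_0_as_mult)
  finally have cp: "char_poly C = (\<Sum>i\<le>d'. (if i = 0 then ?x else 0) * ?x ^ (d' - i)) + (\<Sum>i\<le>d'. monom (- C $$ (i,0)) (d' - i))"
    by (simp add: sum.distrib)
  have "(\<Sum>i\<le>d'. (if i = 0 then ?x else 0) * ?x ^ (d' - i)) = ?x ^ Suc d'"
    by (subst sum.remove[of _ 0]) auto
  also have "\<dots> = monom 1 (Suc d')" by (simp add: monom_altdef)
  finally have cp2: "char_poly C = monom 1 (Suc d') + (\<Sum>i\<le>d'. monom (- C $$ (i,0)) (d' - i))"
    using cp by simp
  have "coeff (char_poly C) (d - 1 - i) = (\<Sum>j\<le>d'. if d' - j = d' - i then - C $$ (j,0) else 0)"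
    unfolding cp2 using dd i by (simp add: coeff_sum)
  also have "\<dots> = (\<Sum>j\<le>d'. if j = i then - C $$ (j,0) else 0)"
    using dd i by (intro sum.cong refl) auto
  also have "\<dots> = - C $$ (i,0)" using dd i by simp
  finally show ?thesis .
qed

lemma char_poly_matrix_four_block:
  fixes A B :: "'a::comm_ring_1 mat"
  assumes A: "A \<in> carrier_mat a a" and B: "B \<in> carrier_mat b b"
  shows "char_poly_matrix (four_block_mat A (0\<^sub>m a b) (0\<^sub>m b a) B) =
    four_block_mat (char_poly_matrix A) (0\<^sub>m a b) (0\<^sub>m b a) (char_poly_matrix B)"
proof (rule eq_matI)
  fix i j assume i: "i < dim_row (four_block_mat (char_poly_matrix A) (0\<^sub>m a b) (0\<^sub>m b a) (char_poly_matrix B))"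
    and j: "j < dim_col (four_block_mat (char_poly_matrix A) (0\<^sub>m a b) (0\<^sub>m b a) (char_poly_matrix B))"
  have i': "i < a + b" and j': "j < a + b" using i j char_poly_matrix_closed[OF A] char_poly_matrix_closed[OF B] by auto
  show "char_poly_matrix (four_block_mat A (0\<^sub>m a b) (0\<^sub>m b a) B) $$ (i, j) =
    four_block_mat (char_poly_matrix A) (0\<^sub>m a b) (0\<^sub>m b a) (char_poly_matrix B) $$ (i, j)"
    using A B i' j' unfolding char_poly_matrix_def
    by (cases "i < a"; cases "j < a") (auto simp add: index_mat_four_block)
qed (use A B in \<open>simp_all add: char_poly_matrix_def\<close>)

lemma char_poly_diag_block_mat:
  fixes As :: "'a::idom mat list"
  assumes "\<And>A. A \<in> set As \<Longrightarrow> dim_col A = dim_row A"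
  shows "char_poly (diag_block_mat As) = prod_list (map char_poly As)"
  using assms
proof (induction As)
  case Nil
  have "char_poly_matrix (0\<^sub>m 0 0 :: 'a mat) = 1\<^sub>m 0" by (rule eq_matI) (simp_all add: char_poly_matrix_def)
  then show ?case by (simp add: char_poly_def)
next
  case (Cons A As)
  let ?B = "diag_block_mat As"
  have dA: "dim_col A = dim_row A" using Cons.prems by simp
  have A: "A \<in> carrier_mat (dim_row A) (dim_row A)" using dA unfolding carrier_mat_def by simp
  have IH: "char_poly ?B = prod_list (map char_poly As)" using Cons.IH Cons.prems by simp
  have "Ball (set As) square_mat" using Cons.prems by simp
  then have "square_mat ?B" by (rule diag_block_mat_square)
  then have sq: "dim_col ?B = dim_row ?B" by simp
  have B: "?B \<in> carrier_mat (dim_row ?B) (dim_row ?B)" using sq unfolding carrier_mat_def by simp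
  have "char_poly (diag_block_mat (A # As)) = char_poly (four_block_mat A (0\<^sub>m (dim_row A) (dim_row ?B)) (0\<^sub>m (dim_row ?B) (dim_row A)) ?B)"
    unfolding diag_block_mat.simps Let_def dA sq ..
  also have "\<dots> = det (four_block_mat (char_poly_matrix A) (0\<^sub>m (dim_row A) (dim_row ?B)) (0\<^sub>m (dim_row ?B) (dim_row A)) (char_poly_matrix ?B))"
    unfolding char_poly_def by (subst char_poly_matrix_four_block[OF A B]) (rule refl)
  also have "\<dots> = char_poly A * char_poly ?B" unfolding char_poly_def
    by (rule det_four_block_mat_upper_right_zero[OF char_poly_matrix_closed[OF A] refl zero_carrier_mat char_poly_matrix_closed[OF B]])
  finally show ?case using IH by simp
qed

lemma block_start_0[simp]: "block_start Cs 0 = 0" unfolding block_start_def by simp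

lemma block_start_Cons_Suc[simp]: "block_start (A # As) (Suc i) = dim_row A + block_start As i"
  unfolding block_start_def by simp

lemma block_start_Suc: "i < length Cs \<Longrightarrow> block_start Cs (Suc i) = block_start Cs i + dim_row (Cs ! i)"
  unfolding block_start_def by (simp add: take_Suc_conv_app_nth)

lemma block_start_length: "block_start Cs (length Cs) = sum_list (map dim_row Cs)"
  unfolding block_start_def by simp

lemma block_start_less:
  assumes pos: "\<forall>C\<in>set Cs. 0 < dim_row C" and ij: "i < j" "j \<le> length Cs"
  shows "block_start Cs i < block_start Cs j"
  using ij
proof (induction j)
  case 0 then show ?case by simp
next
  case (Suc j)
  have "block_start Cs (Suc j) = block_start Cs j + dim_row (Cs ! j)"
    using Suc.prems by (intro block_start_Suc) simp
  moreover have "0 < dim_row (Cs ! j)" using pos Suc.prems by simp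
  moreover have "block_start Cs i \<le> block_start Cs j"
    using Suc by (cases "i = j") auto
  ultimately show ?case by simp
qed

lemma block_start_less_dim:
  assumes pos: "\<forall>C\<in>set Cs. 0 < dim_row C" and i: "i < length Cs"
  shows "block_start Cs i < sum_list (map dim_row Cs)"
  using block_start_less[OF pos i] block_start_length[of Cs] by simp

lemma block_start_inj:
  assumes pos: "\<forall>C\<in>set Cs. 0 < dim_row C"
  shows "inj_on (block_start Cs) {..<length Cs}"
proof (rule inj_onI)
  fix i j assume "i \<in> {..<length Cs}" "j \<in> {..<length Cs}" "block_start Cs i = block_start Cs j"
  then show "i = j" using block_start_less[OF pos, of i j] block_start_less[OF pos, of j i]
    by (metis lessThan_iff less_imp_le_nat linorder_neqE_nat order_less_irrefl)
qed

lemma index_diag_block_mat_Cons: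
  assumes A: "A \<in> carrier_mat d d" and sq: "\<forall>C\<in>set As. dim_col C = dim_row C"
    and i: "i < d + dim_row (diag_block_mat As)" and j: "j < d + dim_row (diag_block_mat As)"
  shows "diag_block_mat (A # As) $$ (i, j) = (if i < d then if j < d then A $$ (i, j) else 0
    else if j < d then 0 else diag_block_mat As $$ (i - d, j - d))"
proof -
  have "map dim_col As = map dim_row As" using sq by (intro map_cong) auto
  then have "dim_col (diag_block_mat As) = dim_row (diag_block_mat As)"
    using dim_diag_block_mat[of As] by metis
  then show ?thesis using A i j by (simp add: Let_def index_mat_four_block)
qed

lemma index_diag_block_mat_companion:
  assumes "\<forall>C\<in>set Cs. 0 < dim_row C \<and> companion_mat C (dim_row C)"
    and "l < sum_list (map dim_row Cs)" "c < sum_list (map dim_row Cs)"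
    and "\<forall>i<length Cs. c \<noteq> block_start Cs i"
  shows "diag_block_mat Cs $$ (l, c) = (if l + 1 = c then 1 else 0)"
  using assms
proof (induction Cs arbitrary: l c)
  case Nil then show ?case by simp
next
  case (Cons A As)
  define d where "d = dim_row A"
  have A: "A \<in> carrier_mat d d" and compA: "companion_mat A d"
    using Cons.prems(1) unfolding d_def companion_mat_def by auto
  have sq: "\<forall>C\<in>set As. dim_col C = dim_row C" using Cons.prems(1) unfolding companion_mat_def by auto
  have dB: "dim_row (diag_block_mat As) = sum_list (map dim_row As)"
    using dim_diag_block_mat[of As] by simp
  have l: "l < d + dim_row (diag_block_mat As)" and c: "c < d + dim_row (diag_block_mat As)"
    using Cons.prems dB unfolding d_def by auto
  have c0: "c \<noteq> 0" using Cons.prems(4) by (metis block_start_0 length_Cons zero_less_Suc)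
  have not_start: "c - d \<noteq> block_start As i" if "d \<le> c" "i < length As" for i
    using Cons.prems(4)[rule_format, of "Suc i"] that unfolding d_def by auto
  consider "c < d" | "d \<le> c" "l < d" | "d \<le> c" "d \<le> l" by linarith
  then show ?case
  proof cases
    case 1
    then show ?thesis using compA c0 l c unfolding index_diag_block_mat_Cons[OF A sq l c] companion_mat_def by auto
  next
    case 2
    have "c \<noteq> d"
    proof
      assume "c = d"
      then have "As \<noteq> []" using c dB by auto
      then show False using \<open>c = d\<close> not_start[of 0] by simp
    qed
    then show ?thesis using 2 unfolding index_diag_block_mat_Cons[OF A sq l c] by auto
  next
    case 3
    have "diag_block_mat As $$ (l - d, c - d) = (if l - d + 1 = c - d then 1 else 0)"
      using Cons.IH Cons.prems(1) l c dB 3 not_start by auto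
    then show ?thesis using 3 unfolding index_diag_block_mat_Cons[OF A sq l c] by auto
  qed
qed

lemma index_S_mat:
  assumes "l < n" "c < n"
  shows "S_mat n $$ (l,c) = (if c = 0 then (if l = n - 1 then -1 else 0) else if l + 1 = c then 1 else 0)"
  using assms unfolding S_mat_def by auto

lemma S_mat_row_sum:
  fixes z :: "nat \<Rightarrow> rat"
  assumes "l < n"
  shows "(\<Sum>c<n. S_mat n $$ (l, c) * z c) = (if l + 1 < n then z (l + 1) else - z 0)"
proof (cases "l + 1 < n")
  case True
  have "(\<Sum>c<n. S_mat n $$ (l, c) * z c) = (\<Sum>c<n. if c = l + 1 then z (l + 1) else 0)"
    using True assms by (intro sum.cong refl) (auto simp: index_S_mat)
  then show ?thesis using True by simp
next
  case False
  have "(\<Sum>c<n. S_mat n $$ (l, c) * z c) = (\<Sum>c<n. if c = 0 then - z 0 else 0)"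
    using False assms by (intro sum.cong refl) (auto simp: index_S_mat)
  then show ?thesis using False assms by simp
qed

text \<open>Off the block-start columns, \<open>Fbar\<close> coincides with the negacyclic shift \<open>S\<close>.\<close>
lemma rcf_row_expansion:
  fixes z :: "nat \<Rightarrow> rat"
  assumes rcf: "rcf_blocks Fbar Cs" and Fbar: "Fbar \<in> carrier_mat n n" and l: "l < n"
  shows "(\<Sum>c<n. Fbar $$ (l, c) * z c) =
    (\<Sum>i<length Cs. (Fbar - S_mat n) $$ (l, block_start Cs i) * z (block_start Cs i))
     + (if l + 1 < n then z (l + 1) else - z 0)"
proof -
  let ?r = "block_start Cs"
  have Cs: "Fbar = diag_block_mat Cs" "\<forall>C\<in>set Cs. 0 < dim_row C \<and> companion_mat C (dim_row C)"
    using rcf unfolding rcf_blocks_def by auto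
  have pos: "\<forall>C\<in>set Cs. 0 < dim_row C" using Cs(2) by auto
  have tot: "sum_list (map dim_row Cs) = n" using Fbar Cs(1) dim_diag_block_mat[of Cs] by simp
  have S: "S_mat n \<in> carrier_mat n n" unfolding S_mat_def by simp
  have "(\<Sum>c<n. Fbar $$ (l, c) * z c) =
      (\<Sum>c<n. (Fbar - S_mat n) $$ (l, c) * z c) + (\<Sum>c<n. S_mat n $$ (l, c) * z c)"
    using Fbar S l by (simp add: sum.distrib[symmetric] algebra_simps)
  also have "(\<Sum>c<n. (Fbar - S_mat n) $$ (l, c) * z c) =
      (\<Sum>c\<in>?r ` {..<length Cs}. (Fbar - S_mat n) $$ (l, c) * z c)"
  proof (rule sum.mono_neutral_right)
    show "?r ` {..<length Cs} \<subseteq> {..<n}" using block_start_less_dim[OF pos] tot by auto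
    show "\<forall>c\<in>{..<n} - ?r ` {..<length Cs}. (Fbar - S_mat n) $$ (l, c) * z c = 0"
    proof
      fix c assume "c \<in> {..<n} - ?r ` {..<length Cs}"
      then have c: "c < n" and not_start: "\<forall>i<length Cs. c \<noteq> ?r i" by auto
      have "c \<noteq> 0" using not_start tot l by (metis block_start_0 length_greater_0_conv list.map(1) sum_list_simps(1) less_nat_zero_code)
      then have "S_mat n $$ (l, c) = (if l + 1 = c then 1 else 0)" using index_S_mat[OF l c] by simp
      moreover have "Fbar $$ (l, c) = (if l + 1 = c then 1 else 0)"
        unfolding Cs(1) using index_diag_block_mat_companion[OF Cs(2)] tot l c not_start by simp
      ultimately show "(Fbar - S_mat n) $$ (l, c) * z c = 0" using Fbar S l c by simp
    qed
  qed simp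
  also have "\<dots> = (\<Sum>i<length Cs. (Fbar - S_mat n) $$ (l, ?r i) * z (?r i))"
    by (rule sum.reindex_cong[OF block_start_inj[OF pos] refl]) simp
  also have "(\<Sum>c<n. S_mat n $$ (l, c) * z c) = (if l + 1 < n then z (l + 1) else - z 0)"
    using S_mat_row_sum[OF l, of z] by simp
  finally show ?thesis .
qed

lemma rcf_blocks_entries_Ints:
  fixes f :: "int poly"
  assumes rcf: "rcf_blocks A Cs" and f: "monic f" and cp: "char_poly A = map_poly of_int f"
    and ij: "i < dim_row A" "j < dim_col A"
  shows "A $$ (i, j) \<in> \<int>"
proof -
  have Cs: "A = diag_block_mat Cs" "\<forall>C\<in>set Cs. 0 < dim_row C \<and> companion_mat C (dim_row C)"
    using rcf unfolding rcf_blocks_def by auto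
  have sq: "\<And>C. C \<in> set Cs \<Longrightarrow> dim_col C = dim_row C"
    using Cs(2) unfolding companion_mat_def by auto
  have block_Ints: "C $$ (a, b) \<in> \<int>" if C: "C \<in> set Cs" and ab: "a < dim_row C" "b < dim_row C" for C a b
  proof (cases "b = 0")
    case True
    define d where "d = dim_row C"
    have comp: "companion_mat C d" and d: "0 < d" using Cs(2) C unfolding d_def by auto
    have "char_poly C dvd prod_list (map char_poly Cs)" using C by (intro prod_list_dvd) simp
    also have "prod_list (map char_poly Cs) = map_poly of_int f"
      unfolding cp[symmetric] Cs(1) by (rule char_poly_diag_block_mat[OF sq, symmetric])
    finally have dvd: "char_poly C dvd map_poly of_int f" .
    have "monic (char_poly C)"
      using comp degree_monic_char_poly[of C d] unfolding companion_mat_def by simp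
    then have "coeff (char_poly C) (d - 1 - a) \<in> \<int>" by (rule monic_dvd_int_poly_coeff_Ints[OF _ f dvd])
    then show ?thesis using coeff_char_poly_companion[OF comp d, of a] ab True unfolding d_def
      by (metis Ints_minus minus_minus)
  next
    case False
    then show ?thesis using Cs(2) C ab unfolding companion_mat_def by auto
  qed
  have "A $$ (i, j) \<in> elements_mat A" using ij unfolding elements_mat_def by force
  then have "A $$ (i, j) \<in> {0} \<union> \<Union> (set (map elements_mat Cs))"
    using elements_diag_block_mat[of Cs] Cs(1) by auto
  then show ?thesis using block_Ints sq by (auto dest!: elements_matD)
qed

lemma char_poly_similar_of_int:
  fixes F :: "int mat" and T Tinv :: "'a :: comm_ring_1 mat"
  assumes F: "F \<in> carrier_mat n n" and T: "T \<in> carrier_mat n n" and Tinv: "Tinv \<in> carrier_mat n n"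
    and inv: "T * Tinv = 1\<^sub>m n" "Tinv * T = 1\<^sub>m n"
  shows "char_poly (T * map_mat of_int F * Tinv) = map_poly of_int (char_poly F)"
proof -
  have "similar_mat (T * map_mat of_int F * Tinv) (map_mat of_int F)"
    unfolding similar_mat_def similar_mat_wit_def Let_def
    using F T Tinv inv by (intro exI[of _ T] exI[of _ Tinv]) auto
  then have "char_poly (T * map_mat of_int F * Tinv) = char_poly (map_mat of_int F)"
    by (rule char_poly_similar)
  also have "\<dots> = map_poly of_int (char_poly F)" by (rule of_int_hom.char_poly_hom[OF F])
  finally show ?thesis .
qed

lemma rcf_block_start_less:
  assumes "rcf_blocks Fbar Cs" and "Fbar \<in> carrier_mat n n" and "i < length Cs"
  shows "block_start Cs i < n"
proof -
  have "sum_list (map dim_row Cs) = n" and "\<forall>C\<in>set Cs. 0 < dim_row C"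
    using assms(1,2) dim_diag_block_mat[of Cs] unfolding rcf_blocks_def by auto
  then show ?thesis using block_start_less_dim assms(3) by metis
qed

lemma similar_rcf_int_mat:
  fixes F :: "int mat"
  assumes F: "F \<in> carrier_mat n n" and T: "T \<in> carrier_mat n n" and Tinv: "Tinv \<in> carrier_mat n n"
    and inv: "T * Tinv = 1\<^sub>m n" "Tinv * T = 1\<^sub>m n" and rcf: "rcf_blocks (T * map_mat of_int F * Tinv) Cs"
  shows "\<exists>Fi. Fi \<in> carrier_mat n n \<and> map_mat of_int Fi = T * map_mat of_int F * Tinv"
proof -
  define A where "A = T * map_mat of_int F * Tinv"
  have A: "A \<in> carrier_mat n n" unfolding A_def using F T Tinv by simp
  have "A $$ (i, j) \<in> \<int>" if "i < n" "j < n" for i j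
  proof (rule rcf_blocks_entries_Ints[OF rcf[folded A_def] _ char_poly_similar_of_int[OF F T Tinv inv, folded A_def]])
    show "monic (char_poly F)" using degree_monic_char_poly[OF F] by simp
  qed (use A that in simp_all)
  then have "map_mat of_int (map_mat floor A) = A" using A by (intro eq_matI) (auto elim!: Ints_cases)
  then show ?thesis unfolding A_def[symmetric] using A by (intro exI[of _ "map_mat floor A"]) simp
qed

lemma int_rcf_row_expansion:
  fixes Fi :: "int mat" and v :: "int vec"
  assumes rcf: "rcf_blocks Fbar Cs" and Fbar: "Fbar \<in> carrier_mat n n"
    and Fi: "map_mat of_int Fi = Fbar" and v: "v \<in> carrier_vec n" and l: "l < n"
  shows "(Fi *\<^sub>v v) $ l =
    (\<Sum>i<length Cs. \<lfloor>(Fbar - S_mat n) $$ (l, block_start Cs i)\<rfloor> * v $ block_start Cs i)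
    + (if l + 1 < n then v $ (l + 1) else - v $ 0)"
proof -
  let ?r = "block_start Cs"
  have Fi': "Fi \<in> carrier_mat n n" using Fbar arg_cong[OF Fi, of dim_row] arg_cong[OF Fi, of dim_col] by auto
  have r: "?r i < n" if "i < length Cs" for i using rcf_block_start_less[OF rcf Fbar that] .
  have floor: "rat_of_int \<lfloor>(Fbar - S_mat n) $$ (l, ?r i)\<rfloor> = (Fbar - S_mat n) $$ (l, ?r i)"
    if "i < length Cs" for i
  proof -
    have "Fbar $$ (l, ?r i) \<in> \<int>" using Fi Fi' l r[OF that] by auto
    then have "(Fbar - S_mat n) $$ (l, ?r i) \<in> \<int>"
      using Fbar l r[OF that] index_S_mat[OF l r[OF that]] by (simp add: S_mat_def)
    then show ?thesis by (metis Ints_cases floor_of_int)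
  qed
  have "rat_of_int ((Fi *\<^sub>v v) $ l) = (\<Sum>c<n. Fbar $$ (l, c) * rat_of_int (v $ c))"
    using Fi' v l Fi by (auto simp: scalar_prod_def lessThan_atLeast0 of_int_hom.hom_sum intro!: sum.cong)
  also have "\<dots> = (\<Sum>i<length Cs. (Fbar - S_mat n) $$ (l, ?r i) * rat_of_int (v $ ?r i))
      + (if l + 1 < n then rat_of_int (v $ (l + 1)) else - rat_of_int (v $ 0))"
    by (rule rcf_row_expansion[OF rcf Fbar l])
  also have "(\<Sum>i<length Cs. (Fbar - S_mat n) $$ (l, ?r i) * rat_of_int (v $ ?r i)) =
      rat_of_int (\<Sum>i<length Cs. \<lfloor>(Fbar - S_mat n) $$ (l, ?r i)\<rfloor> * v $ ?r i)"
    unfolding of_int_hom.hom_sum of_int_mult by (intro sum.cong refl) (simp only: floor lessThan_iff)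
  also have "(if l + 1 < n then rat_of_int (v $ (l + 1)) else - rat_of_int (v $ 0)) =
      rat_of_int (if l + 1 < n then v $ (l + 1) else - v $ 0)" by simp
  finally show ?thesis unfolding of_int_add[symmetric] of_int_eq_iff .
qed

section \<open>Negacyclic arithmetic modulo q\<close>

lemma cmod_cong [simp]: "cmod q a mod q = a mod q"
  unfolding cmod_def by (metis mod_mult_self1 diff_conv_add_uminus mult_minus_left)

lemma cmod_range:
  assumes "0 < q"
  shows "- q \<le> 2 * cmod q a" and "2 * cmod q a < q"
proof -
  define y where "y = (rat_of_int a + rat_of_int q / 2) / rat_of_int q"
  have q: "rat_of_int q > 0" using assms by simp
  have "rat_of_int \<lfloor>y\<rfloor> * rat_of_int q \<le> y * rat_of_int q"
    and "y * rat_of_int q < (rat_of_int \<lfloor>y\<rfloor> + 1) * rat_of_int q"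
    using q by (intro mult_right_mono mult_strict_right_mono; linarith)+
  moreover have "y * rat_of_int q = rat_of_int a + rat_of_int q / 2" unfolding y_def using q by simp
  moreover have "rat_of_int (cmod q a) = rat_of_int a - rat_of_int \<lfloor>y\<rfloor> * rat_of_int q"
    unfolding cmod_def y_def by simp
  ultimately have "rat_of_int (- q) \<le> rat_of_int (2 * cmod q a)"
    and "rat_of_int (2 * cmod q a) < rat_of_int q"
    by (simp_all add: algebra_simps)
  then show "- q \<le> 2 * cmod q a" and "2 * cmod q a < q" by simp_all
qed

lemma cmod_eq_if_cong:
  assumes "0 < q" and "a mod q = b mod q" and "- q \<le> 2 * b" and "2 * b < q"
  shows "cmod q a = b"
proof -
  have "q dvd cmod q a - b" using assms(2) by (simp add: mod_eq_dvd_iff[symmetric])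
  then obtain k where k: "cmod q a - b = q * k" by (elim dvdE)
  have "\<bar>q * k\<bar> < q * 1" using cmod_range[OF assms(1), of a] assms(3,4) k by linarith
  then have "k = 0" using assms(1) by (simp add: abs_mult)
  then show ?thesis using k by simp
qed

definition negacyclic_sign :: "nat \<Rightarrow> nat \<Rightarrow> nat \<Rightarrow> nat \<Rightarrow> int" where
  "negacyclic_sign N i j k = (if i + j = k then 1 else if i + j = k + N then -1 else 0)"

definition negacyclic_mult :: "nat \<Rightarrow> rq \<Rightarrow> rq \<Rightarrow> nat \<Rightarrow> int" where
  "negacyclic_mult N a b k = (\<Sum>i<N. \<Sum>j<N. a i * b j * negacyclic_sign N i j k)"

lemma rmul_eq_cmod_negacyclic_mult:
  "rmul N q a b = (\<lambda>k. if k < N then cmod q (negacyclic_mult N a b k) else 0)"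
  unfolding rmul_def negacyclic_mult_def negacyclic_sign_def
  by (intro ext if_cong refl arg_cong[where f = "cmod q"] sum.cong) auto

lemma negacyclic_mult_sum_left:
  "negacyclic_mult N (\<lambda>k. \<Sum>x\<in>I. f x k) b k = (\<Sum>x\<in>I. negacyclic_mult N (f x) b k)"
  unfolding negacyclic_mult_def by (simp add: sum_distrib_right sum.swap[of _ I])

lemma negacyclic_mult_sum_right:
  "negacyclic_mult N a (\<lambda>k. \<Sum>x\<in>I. f x k) k = (\<Sum>x\<in>I. negacyclic_mult N a (f x) k)"
  unfolding negacyclic_mult_def
  by (simp add: sum_distrib_left sum_distrib_right sum.swap[of _ I])

lemma negacyclic_mult_smult_left:
  "negacyclic_mult N (\<lambda>k. c * a k) b k = c * negacyclic_mult N a b k"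
  unfolding negacyclic_mult_def by (simp add: sum_distrib_left mult.assoc)

lemma negacyclic_mult_smult_right:
  "negacyclic_mult N a (\<lambda>k. c * b k) k = c * negacyclic_mult N a b k"
  unfolding negacyclic_mult_def by (simp add: sum_distrib_left algebra_simps)

lemma div_mod_int_eqI:
  assumes "0 < N" and "x = d * int N + r" and "0 \<le> r" and "r < int N"
  shows "x div int N = d" and "x mod int N = r"
  using assms by (auto simp: div_pos_pos_trivial mod_pos_pos_trivial)

text \<open>The monomial \<open>X^e\<close> of \<open>\<int>[X]/(X^N + 1)\<close>; the sign comes from \<open>X^N = -1\<close>.\<close>

definition X_power :: "nat \<Rightarrow> int \<Rightarrow> nat \<Rightarrow> int" where
  "X_power N e = (\<lambda>k. if k = nat (e mod int N) then (if even (e div int N) then 1 else -1) else 0)"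

lemma negacyclic_mult_X_power_left:
  assumes "k < N"
  shows "negacyclic_mult N (X_power N e) b k =
    (let s = nat (e mod int N); \<sigma> = (if even (e div int N) then 1 else -1) in
     if s \<le> k then \<sigma> * b (k - s) else - \<sigma> * b (k + N - s))"
proof -
  define s where "s = nat (e mod int N)"
  define \<sigma> :: int where "\<sigma> = (if even (e div int N) then 1 else -1)"
  have "s < N" unfolding s_def using assms by (simp add: nat_less_iff)
  have "(\<Sum>j<N. X_power N e i * b j * negacyclic_sign N i j k) =
      (if i = s then \<sigma> * (\<Sum>j<N. b j * negacyclic_sign N s j k) else 0)" for i
    by (simp add: X_power_def s_def \<sigma>_def sum_distrib_left mult.assoc)
  then have "negacyclic_mult N (X_power N e) b k = \<sigma> * (\<Sum>j<N. b j * negacyclic_sign N s j k)"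
    unfolding negacyclic_mult_def using \<open>s < N\<close> by simp
  also have "(\<Sum>j<N. b j * negacyclic_sign N s j k) =
      (if s \<le> k then b (k - s) else - b (k + N - s))"
  proof (cases "s \<le> k")
    case True
    then have "(\<Sum>j<N. b j * negacyclic_sign N s j k) = (\<Sum>j<N. if j = k - s then b (k - s) else 0)"
      by (intro sum.cong) (auto simp: negacyclic_sign_def)
    then show ?thesis using True assms by simp
  next
    case False
    have "(\<Sum>j<N. b j * negacyclic_sign N s j k) = (\<Sum>j<N. if j = k + N - s then - b (k + N - s) else 0)"
      using False \<open>s < N\<close> by (intro sum.cong) (auto simp: negacyclic_sign_def)
    then show ?thesis using False \<open>s < N\<close> by simp
  qed
  finally show ?thesis unfolding Let_def s_def \<sigma>_def by simp
qed

lemma negacyclic_mult_X_power_neg_left: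
  assumes "s \<le> N" and "k < N"
  shows "negacyclic_mult N (X_power N (- int s)) b k =
    (if k + s < N then b (k + s) else - b (k + s - N))"
proof (cases "s = 0")
  case True
  then show ?thesis using negacyclic_mult_X_power_left[OF assms(2), of 0 b] assms(2) by simp
next
  case False
  have N: "0 < N" and lt: "int (N - s) < int N" using assms False by simp_all
  have "- int s = - 1 * int N + int (N - s)" using assms(1) by simp
  from div_mod_int_eqI[OF N this _ lt]
  have "(- int s) div int N = - 1" and "(- int s) mod int N = int (N - s)" by simp_all
  then have "negacyclic_mult N (X_power N (- int s)) b k =
      (if N - s \<le> k then - b (k - (N - s)) else b (k + N - (N - s)))"
    by (simp add: negacyclic_mult_X_power_left[OF assms(2)])
  moreover have "N - s \<le> k \<longleftrightarrow> \<not> k + s < N" and "k - (N - s) = k + s - N"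
    and "k + N - (N - s) = k + s" using assms by arith+
  ultimately show ?thesis by simp
qed

lemma X_power_mult:
  assumes "k < N"
  shows "negacyclic_mult N (X_power N e) (X_power N f) k = X_power N (e + f) k"
proof -
  define \<sigma> :: "int \<Rightarrow> int" where "\<sigma> x = (if even x then 1 else -1)" for x
  have \<sigma>_add: "\<sigma> (x + y) = \<sigma> x * \<sigma> y" for x y by (simp add: \<sigma>_def)
  have X: "X_power N g j = (if j = nat (g mod int N) then \<sigma> (g div int N) else 0)" for g j
    by (simp add: X_power_def \<sigma>_def)
  define s t where "s = nat (e mod int N)" and "t = nat (f mod int N)"
  define d d' where "d = e div int N" and "d' = f div int N"
  have N: "0 < N" using assms by simp
  have st: "s < N" "t < N" using N unfolding s_def t_def by (simp_all add: nat_less_iff)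
  have ef: "e + f = (d + d') * int N + (int s + int t)"
    using N unfolding s_def t_def d_def d'_def by (simp add: algebra_simps)
  have lhs: "negacyclic_mult N (X_power N e) (X_power N f) k =
      (if s \<le> k then \<sigma> d * X_power N f (k - s) else - \<sigma> d * X_power N f (k + N - s))"
    using negacyclic_mult_X_power_left[OF assms, of e] unfolding Let_def s_def d_def \<sigma>_def by simp
  have Xf: "X_power N f = (\<lambda>j. if j = t then \<sigma> d' else 0)"
    by (intro ext) (simp add: X t_def d'_def)
  show ?thesis
  proof (cases "s + t < N")
    case True
    then have "(e + f) div int N = d + d'" and "(e + f) mod int N = int s + int t"
      using div_mod_int_eqI[OF N ef] by simp_all
    then have Xef: "X_power N (e + f) k = (if k = s + t then \<sigma> d * \<sigma> d' else 0)"
      by (simp add: X \<sigma>_add nat_add_distrib)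
    show ?thesis unfolding lhs unfolding Xf Xef using True st assms by auto
  next
    case False
    have ef': "e + f = (d + d' + 1) * int N + int (s + t - N)"
      unfolding ef using False by (simp add: algebra_simps of_nat_diff)
    have "(e + f) div int N = d + d' + 1" and "(e + f) mod int N = int (s + t - N)"
      using div_mod_int_eqI[OF N ef'] st by simp_all
    moreover have "\<sigma> 1 = -1" by (simp add: \<sigma>_def)
    ultimately have Xef: "X_power N (e + f) k = (if k = s + t - N then - (\<sigma> d * \<sigma> d') else 0)"
      by (simp add: X \<sigma>_add)
    show ?thesis unfolding lhs unfolding Xf Xef using False st assms by auto
  qed
qed

lemma X_power_eq_indicator:
  assumes "k < N" and "\<bar>e - int k\<bar> < int N"
  shows "X_power N e k = (if e = int k then 1 else 0)"
proof (cases "e = int k")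
  case True
  then show ?thesis using assms(1) by (simp add: X_power_def)
next
  case False
  have "X_power N e k = 0"
  proof (rule ccontr)
    assume "X_power N e k \<noteq> 0"
    then have "int k = e mod int N" using assms(1) by (auto simp: X_power_def split: if_splits)
    then have "e - int k = int N * (e div int N)" by (simp add: algebra_simps)
    moreover have "e div int N \<noteq> 0" using False calculation by auto
    ultimately have "int N * 1 \<le> \<bar>e - int k\<bar>"
      by (simp add: abs_mult mult_left_mono del: mult_1_right)
    then show False using assms(2) by simp
  qed
  then show ?thesis using False by simp
qed

lemma mixed_radix_diff:
  fixes a a' b b' A B :: nat
  assumes "a < A" "a' < A" "b < B" "b' < B"
  shows "\<bar>int a - int a' + int A * (int b - int b')\<bar> < int A * int B"
    and "int a - int a' + int A * (int b - int b') = 0 \<longleftrightarrow> a = a' \<and> b = b'"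
proof -
  have "\<bar>int b - int b'\<bar> \<le> int B - 1" using assms by linarith
  then have "int A * \<bar>int b - int b'\<bar> \<le> int A * (int B - 1)" by (rule mult_left_mono) simp
  moreover have "\<bar>int a - int a'\<bar> < int A" using assms by linarith
  moreover have "\<bar>int a - int a' + int A * (int b - int b')\<bar> \<le>
      \<bar>int a - int a'\<bar> + int A * \<bar>int b - int b'\<bar>"
    by (metis abs_triangle_ineq abs_mult abs_of_nat)
  ultimately show "\<bar>int a - int a' + int A * (int b - int b')\<bar> < int A * int B"
    by (simp add: algebra_simps)
  show "int a - int a' + int A * (int b - int b') = 0 \<longleftrightarrow> a = a' \<and> b = b'"
  proof
    assume eq: "int a - int a' + int A * (int b - int b') = 0"
    have "b = b'"
    proof (rule ccontr)
      assume "b \<noteq> b'"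
      then have "int A * 1 \<le> int A * \<bar>int b - int b'\<bar>" by (intro mult_left_mono) auto
      then show False using eq \<open>\<bar>int a - int a'\<bar> < int A\<close> by (simp add: abs_mult)
    qed
    then show "a = a' \<and> b = b'" using eq by simp
  qed simp
qed

lemma X_power_mixed_radix:
  assumes "N = A * B * E" and "0 < E" and "k < N"
    and "a < A" "a' < A" "b < B" "b' < B"
    and "e - int k = int E * (int a - int a' + int A * (int b - int b'))"
  shows "X_power N e k = (if a = a' \<and> b = b' then 1 else 0)"
proof -
  note radix = mixed_radix_diff[OF assms(4-7)]
  have "\<bar>e - int k\<bar> < int E * (int A * int B)"
    unfolding assms(8) abs_mult using radix(1) assms(2) by simp
  then have "\<bar>e - int k\<bar> < int N" by (simp add: assms(1) ac_simps)
  moreover have "e = int k \<longleftrightarrow> a = a' \<and> b = b'"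
    using radix(2) assms(2,8) by (metis eq_iff_diff_eq_0 mult_eq_0_iff of_nat_0_less_iff less_irrefl)
  ultimately show ?thesis using X_power_eq_indicator[OF assms(3)] by simp
qed

definition X_power_comb :: "nat \<Rightarrow> 'a set \<Rightarrow> ('a \<Rightarrow> int) \<Rightarrow> ('a \<Rightarrow> int) \<Rightarrow> rq" where
  "X_power_comb N I c e = (\<lambda>k. \<Sum>x\<in>I. c x * X_power N (e x) k)"

lemma negacyclic_mult_comb_X_power:
  assumes "k < N"
  shows "negacyclic_mult N (X_power_comb N I c e) (X_power N f) k = X_power_comb N I c (\<lambda>x. e x + f) k"
  unfolding X_power_comb_def
  by (simp add: negacyclic_mult_sum_left negacyclic_mult_smult_left X_power_mult[OF assms])

lemma negacyclic_mult_comb_comb: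
  assumes "k < N"
  shows "negacyclic_mult N (X_power_comb N I c e) (X_power_comb N J d f) k =
    (\<Sum>y\<in>J. d y * X_power_comb N I c (\<lambda>x. e x + f y) k)"
  unfolding X_power_comb_def[of N J]
  by (simp add: negacyclic_mult_sum_right negacyclic_mult_smult_right
      negacyclic_mult_comb_X_power[OF assms])

lemma X_power_comb_coeff_single:
  assumes "finite I" and "x0 \<in> I" and "\<And>x. x \<in> I \<Longrightarrow> X_power N (e x) k = (if x = x0 then 1 else 0)"
  shows "X_power_comb N I c e k = c x0"
proof -
  have "X_power_comb N I c e k = (\<Sum>x\<in>I. if x = x0 then c x0 else 0)"
    unfolding X_power_comb_def by (intro sum.cong) (auto simp: assms(3))
  then show ?thesis using assms(1,2) by simp
qed

lemma X_power_comb_slot_coeff: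
  assumes "N = n * D" and "0 < D" and "l < n"
  shows "X_power_comb N {..<n} c (\<lambda>i. int (i * D)) (l * D) = c l"
proof (rule X_power_comb_coeff_single)
  fix i assume "i \<in> {..<n}"
  then show "X_power N (int (i * D)) (l * D) = (if i = l then 1 else 0)"
    using X_power_mixed_radix[of N D n 1 "l * D" 0 0 i l "int (i * D)"] assms
    by (simp add: algebra_simps)
qed (use assms in auto)

text \<open>The operations of \<open>R_q\<close> respect coefficientwise congruence modulo \<open>q\<close>, so they may be
  computed in \<open>\<int>[X]/(X^N + 1)\<close> without reduction.\<close>

definition cong_coeffs :: "nat \<Rightarrow> int \<Rightarrow> rq \<Rightarrow> rq \<Rightarrow> bool" where
  "cong_coeffs N q a b \<longleftrightarrow> (\<forall>k<N. a k mod q = b k mod q)"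

lemma cong_coeffs_refl [simp]: "cong_coeffs N q a a"
  unfolding cong_coeffs_def by simp

lemma cong_coeffs_eqI: "(\<And>k. k < N \<Longrightarrow> a k = b k) \<Longrightarrow> cong_coeffs N q a b"
  unfolding cong_coeffs_def by simp

lemma cong_coeffs_trans: "cong_coeffs N q a b \<Longrightarrow> cong_coeffs N q b c \<Longrightarrow> cong_coeffs N q a c"
  unfolding cong_coeffs_def by simp

lemma cong_coeffsD: "cong_coeffs N q a b \<Longrightarrow> k < N \<Longrightarrow> a k mod q = b k mod q"
  unfolding cong_coeffs_def by simp

lemma sum_mod_cong:
  assumes "\<And>x. x \<in> A \<Longrightarrow> f x mod (q::int) = g x mod q"
  shows "sum f A mod q = sum g A mod q"
  by (metis (mono_tags, lifting) assms mod_sum_eq sum.cong)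

lemma negacyclic_mult_mod_cong:
  assumes "cong_coeffs N q a a'" and "cong_coeffs N q b b'"
  shows "negacyclic_mult N a b k mod q = negacyclic_mult N a' b' k mod q"
  unfolding negacyclic_mult_def
  using assms by (intro sum_mod_cong mod_mult_cong) (auto simp: cong_coeffs_def)

lemma cong_coeffs_rmul:
  assumes "cong_coeffs N q a a'" and "cong_coeffs N q b b'"
  shows "cong_coeffs N q (rmul N q a b) (negacyclic_mult N a' b')"
  unfolding cong_coeffs_def rmul_eq_cmod_negacyclic_mult
  using negacyclic_mult_mod_cong[OF assms] by simp

lemma cong_coeffs_rsum:
  assumes "\<And>x. x \<in> I \<Longrightarrow> cong_coeffs N q (f x) (g x)"
  shows "cong_coeffs N q (rsum N q f I) (\<lambda>k. \<Sum>x\<in>I. g x k)"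
  using assms unfolding cong_coeffs_def rsum_def by (auto intro!: sum_mod_cong)

lemma radd_mod_eq: "k < N \<Longrightarrow> radd N q a b k mod q = (a k + b k) mod q"
  unfolding radd_def by simp

lemma rsum_mod_eq: "k < N \<Longrightarrow> rsum N q f I k mod q = (\<Sum>i\<in>I. f i k) mod q"
  unfolding rsum_def by simp

lemma cong_coeffs_Xpow: "cong_coeffs N q (Xpow N q e) (X_power N e)"
  unfolding cong_coeffs_def Xpow_def X_power_def by simp

lemma cong_coeffs_rsum_monomials:
  "cong_coeffs N q (rsum N q (\<lambda>i. rmul N q (rconst N q (c i)) (Xpow N q (e i))) I) (X_power_comb N I c e)"
  unfolding X_power_comb_def
proof (rule cong_coeffs_rsum, rule cong_coeffs_trans[OF cong_coeffs_rmul[OF _ cong_coeffs_Xpow]])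
  fix i
  show "cong_coeffs N q (rconst N q (c i)) (\<lambda>k. c i * X_power N 0 k)"
    unfolding cong_coeffs_def rconst_def X_power_def by auto
  show "cong_coeffs N q (negacyclic_mult N (\<lambda>k. c i * X_power N 0 k) (X_power N (e i)))
      (\<lambda>k. c i * X_power N (e i) k)"
    by (rule cong_coeffs_eqI) (simp add: negacyclic_mult_smult_left X_power_mult)
qed

lemma cong_coeffs_rsum_rmul_Xpow:
  "cong_coeffs N q
     (rsum N q (\<lambda>i. rmul N q (rsum N q (\<lambda>j. rmul N q (rconst N q (c i j)) (Xpow N q (e j))) J)
                               (Xpow N q (f i))) I)
     (X_power_comb N (I \<times> J) (\<lambda>(i, j). c i j) (\<lambda>(i, j). e j + f i))"
proof -
  have "cong_coeffs N q
     (rsum N q (\<lambda>i. rmul N q (rsum N q (\<lambda>j. rmul N q (rconst N q (c i j)) (Xpow N q (e j))) J)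
                               (Xpow N q (f i))) I)
     (\<lambda>k. \<Sum>i\<in>I. X_power_comb N J (c i) (\<lambda>j. e j + f i) k)"
  proof (rule cong_coeffs_rsum, rule cong_coeffs_trans[OF cong_coeffs_rmul])
    fix i
    show "cong_coeffs N q (negacyclic_mult N (X_power_comb N J (c i) e) (X_power N (f i)))
        (X_power_comb N J (c i) (\<lambda>j. e j + f i))"
      by (rule cong_coeffs_eqI) (rule negacyclic_mult_comb_X_power)
  qed (rule cong_coeffs_rsum_monomials cong_coeffs_Xpow)+
  then show ?thesis
    by (simp add: X_power_comb_def sum.cartesian_product case_prod_beta)
qed

section \<open>Slots of packed polynomials\<close>

lemma mult_div_eq_of_eq_mult:
  fixes N n D i :: nat
  assumes "N = n * D" and "0 < n"
  shows "i * N div n = i * D"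
proof -
  have "i * N = n * (i * D)" unfolding assms(1) by (simp add: ac_simps)
  then show ?thesis using assms(2) by (simp only:) simp
qed

lemma Slot_cong_X_power_comb:
  assumes "N = n * D" and "0 < D"
  shows "cong_coeffs N q (Slot N n w) (X_power_comb N {..<n} (\<lambda>j. w (j * D)) (\<lambda>j. int (j * D)))"
proof (rule cong_coeffs_eqI, rule sym)
  fix k assume "k < N"
  note assms = assms this
  have n: "0 < n" using assms by (cases n) auto
  have "X_power N (int (j * D)) k = (if k = j * D then 1 else 0)" if "j < n" for j
  proof -
    have "j * D < N" using that assms by simp
    then show ?thesis by (simp add: X_power_def nat_int_comparison)
  qed
  then have "X_power_comb N {..<n} (\<lambda>j. w (j * D)) (\<lambda>j. int (j * D)) k =
      (\<Sum>j<n. if k = j * D then w k else 0)"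
    unfolding X_power_comb_def by (intro sum.cong) auto
  also have "\<dots> = Slot N n w k"
  proof (cases "\<exists>i<n. k = i * D")
    case True
    then obtain i where i: "i < n" "k = i * D" by blast
    then have "(\<Sum>j<n. if k = j * D then w k else 0) = (\<Sum>j<n. if j = i then w k else 0)"
      using assms(2) by (intro sum.cong) auto
    then show ?thesis using i assms n unfolding Slot_def by auto
  next
    case False
    then show ?thesis using assms n unfolding Slot_def by auto
  qed
  finally show "X_power_comb N {..<n} (\<lambda>j. w (j * D)) (\<lambda>j. int (j * D)) k = Slot N n w k" .
qed

lemma Pack_cong_X_power_comb:
  assumes "N = n * D" and "0 < n"
  shows "cong_coeffs N q (Pack N n q a) (X_power_comb N {..<n} (\<lambda>i. a $ i) (\<lambda>i. int (i * D)))"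
  unfolding Pack_def mult_div_eq_of_eq_mult[OF assms] by (rule cong_coeffs_rsum_monomials)

lemma Pack_slot_cong:
  assumes "N = n * D" and "0 < D" and "l < n"
  shows "Pack N n q a (l * D) mod q = a $ l mod q"
  using cong_coeffsD[OF Pack_cong_X_power_comb[OF assms(1)], of "l * D"]
    X_power_comb_slot_coeff[OF assms] assms by simp

lemma feedback_term_slot_cong:
  assumes "N = n * D" and "0 < D" and "l < n" and "r < n"
  shows "rmul N q (Pack N n q a) (Slot N 1 (rmul N q (Xpow N q (- int (r * D))) z)) (l * D) mod q
    = a $ l * z (r * D) mod q"
proof -
  let ?w = "rmul N q (Xpow N q (- int (r * D))) z"
  have N: "0 < N" and lD: "l * D < N" and rD: "r * D \<le> N" using assms by simp_all
  have "?w 0 mod q = negacyclic_mult N (X_power N (- int (r * D))) z 0 mod q"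
    using N by (simp add: rmul_eq_cmod_negacyclic_mult negacyclic_mult_mod_cong[OF cong_coeffs_Xpow cong_coeffs_refl])
  also have "negacyclic_mult N (X_power N (- int (r * D))) z 0 = z (r * D)"
    using negacyclic_mult_X_power_neg_left[OF rD N] assms by simp
  finally have w0: "?w 0 mod q = z (r * D) mod q" .
  have "cong_coeffs N q (Slot N 1 ?w) (\<lambda>k. ?w 0 * X_power N 0 k)"
    by (rule cong_coeffs_eqI) (auto simp: Slot_def X_power_def)
  from cong_coeffs_rmul[OF Pack_cong_X_power_comb[OF assms(1)] this] assms(3)
  have "rmul N q (Pack N n q a) (Slot N 1 ?w) (l * D) mod q =
      negacyclic_mult N (X_power_comb N {..<n} (\<lambda>i. a $ i) (\<lambda>i. int (i * D)))
        (\<lambda>k. ?w 0 * X_power N 0 k) (l * D) mod q"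
    using lD by (intro cong_coeffsD) auto
  also have "negacyclic_mult N (X_power_comb N {..<n} (\<lambda>i. a $ i) (\<lambda>i. int (i * D)))
        (\<lambda>k. ?w 0 * X_power N 0 k) (l * D) = ?w 0 * a $ l"
    using X_power_comb_slot_coeff[OF assms(1-3)]
    by (simp add: negacyclic_mult_smult_right negacyclic_mult_comb_X_power[OF lD])
  finally show ?thesis using w0 by (metis mod_mult_cong mult.commute)
qed

lemma rotation_slot_cong:
  assumes "N = n * D" and "0 < D" and "l < n"
  shows "rmul N q (Xpow N q (- int D)) z (l * D) mod q
    = (if l + 1 < n then z ((l + 1) * D) else - z 0) mod q"
proof -
  have lD: "l * D < N" and "D \<le> N" using assms by simp_all
  have "rmul N q (Xpow N q (- int D)) z (l * D) mod q
      = negacyclic_mult N (X_power N (- int D)) z (l * D) mod q"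
    using lD by (simp add: rmul_eq_cmod_negacyclic_mult negacyclic_mult_mod_cong[OF cong_coeffs_Xpow cong_coeffs_refl])
  also have "negacyclic_mult N (X_power N (- int D)) z (l * D)
      = (if l + 1 < n then z ((l + 1) * D) else - z 0)"
  proof -
    have "l * D + D = (l + 1) * D" by simp
    then have "l * D + D < N \<longleftrightarrow> l + 1 < n" using assms by (simp only: mult_less_cancel2) simp
    moreover have "l * D + D - N = 0" if "\<not> l + 1 < n"
    proof -
      have "n = l + 1" using that assms by simp
      then show ?thesis using assms by simp
    qed
    ultimately show ?thesis
      using negacyclic_mult_X_power_neg_left[OF \<open>D \<le> N\<close> lD, of z] by (simp add: add.commute)
  qed
  finally show ?thesis .
qed

lemma input_term_slot_cong:
  assumes "N = n * D" and "0 < D" and "p \<le> D" and "l < n"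
  shows "rmul N q
      (rsum N q (\<lambda>i. rmul N q (rsum N q (\<lambda>j. rmul N q (rconst N q (G i j)) (Xpow N q (- int j))) {..<p})
                               (Xpow N q (int (i * N div n)))) {..<n})
      (rsum N q (\<lambda>j. rmul N q (rconst N q (y j)) (Xpow N q (int j))) {..<p}) (l * D) mod q
    = (\<Sum>j<p. G l j * y j) mod q" (is "?lhs (l * D) mod q = _")
proof -
  let ?G = "X_power_comb N ({..<n} \<times> {..<p}) (\<lambda>(i, j). G i j) (\<lambda>(i, j). - int j + int (i * D))"
  have lD: "l * D < N" using assms by simp
  have ND: "i * N div n = i * D" for i using assms by (intro mult_div_eq_of_eq_mult) auto
  have "cong_coeffs N q ?lhs (negacyclic_mult N ?G (X_power_comb N {..<p} y int))"
    unfolding ND by (rule cong_coeffs_rmul[OF cong_coeffs_rsum_rmul_Xpow cong_coeffs_rsum_monomials])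
  then have "?lhs (l * D) mod q = negacyclic_mult N ?G (X_power_comb N {..<p} y int) (l * D) mod q"
    using lD by (rule cong_coeffsD)
  also have "negacyclic_mult N ?G (X_power_comb N {..<p} y int) (l * D) = (\<Sum>j'<p. y j' * G l j')"
  proof -
    have "X_power_comb N ({..<n} \<times> {..<p}) (\<lambda>(i, j). G i j)
        (\<lambda>x. (case x of (i, j) \<Rightarrow> - int j + int (i * D)) + int j') (l * D) = (\<lambda>(i, j). G i j) (l, j')"
      if "j' < p" for j'
    proof (rule X_power_comb_coeff_single)
      fix x assume "x \<in> {..<n} \<times> {..<p}"
      then obtain i j where x: "x = (i, j)" "i < n" "j < p" by auto
      then show "X_power N ((case x of (i, j) \<Rightarrow> - int j + int (i * D)) + int j') (l * D)
          = (if x = (l, j') then 1 else 0)"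
        using X_power_mixed_radix[of N D n 1 "l * D" j' j i l] assms that
        by (auto simp: algebra_simps)
    qed (use assms that in auto)
    then show ?thesis by (simp add: negacyclic_mult_comb_comb[OF lD])
  qed
  finally show ?thesis by (simp add: mult.commute)
qed

lemma output_slot_cong:
  assumes "N = n * D" and "0 < n" and "D = \<tau> * E" and "0 < E" and "m \<le> \<tau>" and "l < m"
  shows "rmul N q
      (rsum N q (\<lambda>i. rmul N q (rsum N q (\<lambda>j. rmul N q (rconst N q (H i j))
                                                     (Xpow N q (- int (j * N div n)))) {..<n})
                               (Xpow N q (int (i * N div (n * \<tau>))))) {..<m})
      (Slot N n z) (l * E) mod q
    = (\<Sum>j<n. H l j * z (j * D)) mod q" (is "?lhs (l * E) mod q = _")
proof -
  let ?H = "X_power_comb N ({..<m} \<times> {..<n}) (\<lambda>(i, j). H i j) (\<lambda>(i, j). - int (j * D) + int (i * E))"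
  let ?z = "X_power_comb N {..<n} (\<lambda>j. z (j * D)) (\<lambda>j. int (j * D))"
  have \<tau>: "0 < \<tau>" using assms by auto
  have "l * E < \<tau> * E" using assms by simp
  also have "\<dots> \<le> N" using assms by simp
  finally have lE: "l * E < N" .
  have ND: "j * N div n = j * D" and NE: "i * N div (n * \<tau>) = i * E" for i j
    using assms \<tau> by (simp_all add: ac_simps)
  have "cong_coeffs N q (Slot N n z) ?z" using Slot_cong_X_power_comb[OF assms(1)] assms \<tau> by simp
  then have "cong_coeffs N q ?lhs (negacyclic_mult N ?H ?z)"
    unfolding ND NE by (rule cong_coeffs_rmul[OF cong_coeffs_rsum_rmul_Xpow])
  then have "?lhs (l * E) mod q = negacyclic_mult N ?H ?z (l * E) mod q"
    using lE by (rule cong_coeffsD)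
  also have "negacyclic_mult N ?H ?z (l * E) = (\<Sum>j'<n. z (j' * D) * H l j')"
  proof -
    have "X_power_comb N ({..<m} \<times> {..<n}) (\<lambda>(i, j). H i j)
        (\<lambda>x. (case x of (i, j) \<Rightarrow> - int (j * D) + int (i * E)) + int (j' * D)) (l * E)
        = (\<lambda>(i, j). H i j) (l, j')"
      if "j' < n" for j'
    proof (rule X_power_comb_coeff_single)
      fix x assume "x \<in> {..<m} \<times> {..<n}"
      then obtain i j where x: "x = (i, j)" "i < m" "j < n" by auto
      then show "X_power N ((case x of (i, j) \<Rightarrow> - int (j * D) + int (i * E)) + int (j' * D)) (l * E)
          = (if x = (l, j') then 1 else 0)"
        using X_power_mixed_radix[of N \<tau> n E "l * E" i l j' j] assms that lE
        by (auto simp: algebra_simps)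
    qed (use assms that in auto)
    then show ?thesis by (simp add: negacyclic_mult_comb_comb[OF lE])
  qed
  finally show ?thesis by (simp add: mult.commute)
qed

section \<open>The reformulated controller\<close>

lemma le_two_pow_ceiling_log: "m \<le> 2 ^ nat \<lceil>log 2 (real m)\<rceil>"
proof (cases "m = 0")
  case False
  define a where "a = nat \<lceil>log 2 (real m)\<rceil>"
  have m: "1 \<le> real m" using False by simp
  have "log 2 (real m) \<le> real a" unfolding a_def by linarith
  then have "2 powr log 2 (real m) \<le> 2 powr real a" by (rule powr_mono) simp
  then have "real m \<le> real (2 ^ a)" using m by (simp add: powr_realpow)
  then show ?thesis unfolding a_def by linarith
qed simp

lemma packing_layout:
  fixes N n p m \<tau> :: nat
  assumes "\<exists>k. N = 2 ^ k" and "\<exists>k. n = 2 ^ k" and "n dvd N" and "n * p \<le> N"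
    and "\<tau> = 2 ^ nat \<lceil>log 2 (real m)\<rceil>" and "\<tau> \<le> N div n"
  shows "\<exists>D E. N = n * D \<and> D = \<tau> * E \<and> 0 < n \<and> 0 < D \<and> 0 < E \<and> p \<le> D \<and> m \<le> \<tau>"
proof -
  obtain a b where a: "N = 2 ^ a" and b: "n = 2 ^ b" using assms(1,2) by blast
  define D where "D = N div n"
  have n: "0 < n" using b by simp
  have ND: "N = n * D" unfolding D_def using assms(3) by simp
  have "(2::nat) ^ b \<le> 2 ^ a" using a b assms(3) by (simp add: dvd_imp_le)
  then have "b \<le> a" by (simp add: power_increasing_iff)
  then have D: "D = 2 ^ (a - b)" unfolding D_def a b by (simp add: power_diff)
  have "(2::nat) ^ nat \<lceil>log 2 (real m)\<rceil> \<le> 2 ^ (a - b)" using assms(5,6) D unfolding D_def by simp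
  then have "\<tau> dvd D" unfolding assms(5) D by (simp add: le_imp_power_dvd power_increasing_iff)
  then obtain E where DE: "D = \<tau> * E" by (elim dvdE)
  moreover have "0 < D" using D by simp
  moreover have "0 < E" using DE \<open>0 < D\<close> by (cases E) auto
  moreover have "p \<le> D" using assms(4) ND n by simp
  moreover have "m \<le> \<tau>" unfolding assms(5) by (rule le_two_pow_ceiling_log)
  ultimately show ?thesis using ND n by blast
qed

lemma abs_le_vnorm_inf: "i < dim_vec v \<Longrightarrow> \<bar>v $ i\<bar> \<le> vnorm_inf v"
  unfolding vnorm_inf_def by (intro Max_ge) auto

lemma int_vec_entry_bound:
  fixes w :: "int vec" and q :: int
  assumes "map_vec of_int w = v" and "vnorm_inf v < rat_of_int q / 2" and "l < dim_vec w"
  shows "- q \<le> 2 * w $ l" and "2 * w $ l < q"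
proof -
  have "\<bar>rat_of_int (w $ l)\<bar> \<le> vnorm_inf v"
    using abs_le_vnorm_inf[of l v] assms(1,3) by auto
  then have "rat_of_int (2 * \<bar>w $ l\<bar>) < rat_of_int q" using assms(2) by simp
  then have "2 * \<bar>w $ l\<bar> < q" by (simp only: of_int_less_iff)
  then show "- q \<le> 2 * w $ l" and "2 * w $ l < q" by linarith+
qed

lemma smult_mat_mult_vec:
  assumes "A \<in> carrier_mat nr nc" and "v \<in> carrier_vec nc"
  shows "(k \<cdot>\<^sub>m A) *\<^sub>v v = k \<cdot>\<^sub>v (A *\<^sub>v (v :: 'a :: comm_ring_1 vec))"
  using assms by (intro eq_vecI) (auto simp: scalar_prod_smult_left)

lemma map_vec_of_int_add:
  assumes "u \<in> carrier_vec n" and "w \<in> carrier_vec n"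
  shows "map_vec (of_int :: int \<Rightarrow> 'a :: ring_1) (u + w) = map_vec of_int u + map_vec of_int w"
  using assms by (intro eq_vecI) auto

lemma map_vec_of_int_mult:
  assumes "A \<in> carrier_mat nr n" and "v \<in> carrier_vec n"
  shows "map_vec (of_int :: int \<Rightarrow> 'a :: comm_ring_1) (A *\<^sub>v v) = map_mat of_int A *\<^sub>v map_vec of_int v"
  using of_int_hom.mult_mat_vec_hom[OF assms] by simp

lemma scaled_similar_trajectory:
  fixes F Fi Gb :: "int mat" and T Tinv G :: "rat mat" and L s1 :: rat
  assumes F: "F \<in> carrier_mat n n" and G: "G \<in> carrier_mat n p"
    and T: "T \<in> carrier_mat n n" and Tinv: "Tinv \<in> carrier_mat n n" and inv: "Tinv * T = 1\<^sub>m n"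
    and Fi: "Fi \<in> carrier_mat n n" "map_mat of_int Fi = T * map_mat of_int F * Tinv"
    and Gb: "Gb \<in> carrier_mat n p" "map_mat of_int Gb = (1 / s1) \<cdot>\<^sub>m (T * G)"
    and y: "\<And>t. y t \<in> carrier_vec p"
    and yb: "\<And>t. yb t \<in> carrier_vec p" "\<And>t. map_vec of_int (yb t) = (1 / L) \<cdot>\<^sub>v y t"
    and x0: "x 0 \<in> carrier_vec n"
    and x_step: "\<And>t. x (Suc t) = map_mat of_int F *\<^sub>v x t + G *\<^sub>v y t"
    and z: "\<And>t. z t \<in> carrier_vec n"
    and z0: "map_vec of_int (z 0) = (1 / (L * s1)) \<cdot>\<^sub>v (T *\<^sub>v x 0)"
    and z_step: "\<And>t. z (Suc t) = Fi *\<^sub>v z t + Gb *\<^sub>v yb t"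
  shows "map_vec of_int (z t) = (1 / (L * s1)) \<cdot>\<^sub>v (T *\<^sub>v x t)"
proof (induction t)
  case 0
  show ?case by (rule z0)
next
  case (Suc t)
  let ?F = "map_mat of_int F :: rat mat"
  let ?Fbar = "T * ?F * Tinv"
  have F': "?F \<in> carrier_mat n n" using F by simp
  have Fbar: "?Fbar \<in> carrier_mat n n" using T Tinv F' by simp
  have x: "x t \<in> carrier_vec n" by (induction t) (use x0 x_step F' G y in auto)
  have Tx: "T *\<^sub>v x t \<in> carrier_vec n" using T x by simp
  have similar: "?Fbar *\<^sub>v (T *\<^sub>v x t) = T *\<^sub>v (?F *\<^sub>v x t)"
  proof -
    have "?Fbar *\<^sub>v (T *\<^sub>v x t) = (?Fbar * T) *\<^sub>v x t" using Fbar T x by simp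
    also have "?Fbar * T = T * ?F * (Tinv * T)"
      by (rule assoc_mult_mat[OF mult_carrier_mat[OF T F'] Tinv T])
    also have "\<dots> = T * ?F" unfolding inv using T F' by simp
    also have "(T * ?F) *\<^sub>v x t = T *\<^sub>v (?F *\<^sub>v x t)" using T F' x by simp
    finally show ?thesis .
  qed
  have "map_vec of_int (z (Suc t)) = map_vec of_int (Fi *\<^sub>v z t) + map_vec of_int (Gb *\<^sub>v yb t)"
    unfolding z_step using Fi(1) z Gb(1) yb(1) by (intro map_vec_of_int_add[of _ n]) auto
  also have "map_vec of_int (Fi *\<^sub>v z t) = ?Fbar *\<^sub>v ((1 / (L * s1)) \<cdot>\<^sub>v (T *\<^sub>v x t))"
    unfolding map_vec_of_int_mult[OF Fi(1) z] Suc Fi(2) ..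
  also have "\<dots> = (1 / (L * s1)) \<cdot>\<^sub>v (T *\<^sub>v (?F *\<^sub>v x t))"
    using mult_mat_vec[OF Fbar Tx] similar by simp
  also have "map_vec (of_int :: int \<Rightarrow> rat) (Gb *\<^sub>v yb t) = map_mat of_int Gb *\<^sub>v map_vec of_int (yb t)"
    by (rule map_vec_of_int_mult[OF Gb(1) yb(1)])
  also have "\<dots> = (1 / (L * s1)) \<cdot>\<^sub>v (T *\<^sub>v (G *\<^sub>v y t))"
    unfolding Gb(2) yb(2) using T G y
    by (simp add: smult_mat_mult_vec[of _ n p] mult_mat_vec[of _ n p] smult_smult_assoc)
  also have "(1 / (L * s1)) \<cdot>\<^sub>v (T *\<^sub>v (?F *\<^sub>v x t)) + (1 / (L * s1)) \<cdot>\<^sub>v (T *\<^sub>v (G *\<^sub>v y t))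
      = (1 / (L * s1)) \<cdot>\<^sub>v (T *\<^sub>v x (Suc t))"
    unfolding x_step using T F' G x y
    by (simp add: mult_add_distrib_mat_vec[of _ n n] smult_add_distrib_vec[of _ n])
  finally show ?case .
qed

lemma scaled_output:
  fixes Hb :: "int mat" and H Tinv T :: "rat mat" and c d :: rat
  assumes H: "H \<in> carrier_mat m n" and T: "T \<in> carrier_mat n n" and Tinv: "Tinv \<in> carrier_mat n n"
    and inv: "Tinv * T = 1\<^sub>m n"
    and Hb: "Hb \<in> carrier_mat m n" "map_mat of_int Hb = d \<cdot>\<^sub>m (H * Tinv)"
    and x: "x \<in> carrier_vec n" and z: "z \<in> carrier_vec n"
    and zx: "map_vec of_int z = c \<cdot>\<^sub>v (T *\<^sub>v x)"
  shows "map_vec of_int (Hb *\<^sub>v z) = (c * d) \<cdot>\<^sub>v (H *\<^sub>v x)"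
proof -
  have "map_vec of_int (Hb *\<^sub>v z) = (d \<cdot>\<^sub>m (H * Tinv)) *\<^sub>v (c \<cdot>\<^sub>v (T *\<^sub>v x))"
    unfolding map_vec_of_int_mult[OF Hb(1) z] Hb(2) zx ..
  also have "\<dots> = (c * d) \<cdot>\<^sub>v ((H * Tinv) *\<^sub>v (T *\<^sub>v x))"
    using H Tinv T x
    by (simp add: smult_mat_mult_vec[of _ m n] mult_mat_vec[of _ m n] smult_smult_assoc mult.commute
        del: assoc_mult_mat_vec)
  also have "(H * Tinv) *\<^sub>v (T *\<^sub>v x) = ((H * Tinv) * T) *\<^sub>v x"
    using H Tinv T x by (intro assoc_mult_mat_vec[symmetric]) auto
  also have "(H * Tinv) * T = H" using H Tinv T inv by simp
  finally show ?thesis .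
qed

lemma feedback_slot_cong:
  assumes N: "N = n * D" "0 < n" "0 < D"
    and rcf: "rcf_blocks Fbar Cs" and Fbar: "Fbar \<in> carrier_mat n n"
    and Ft: "\<And>i. Ft i = Pack N n q (map_vec floor (col (Fbar - S_mat n) (block_start Cs i)))"
    and slots: "\<And>j. j < n \<Longrightarrow> z (j * D) mod q = v $ j mod q"
    and l: "l < n"
  shows "rsum N q (\<lambda>i. rmul N q (Ft i)
             (Slot N 1 (rmul N q (Xpow N q (- int (block_start Cs i * N div n))) z))) {..<length Cs} (l * D)
      mod q = (\<Sum>i<length Cs. \<lfloor>(Fbar - S_mat n) $$ (l, block_start Cs i)\<rfloor> * v $ block_start Cs i) mod q"
proof -
  let ?r = "block_start Cs"
  have ND: "i * N div n = i * D" for i using N by (intro mult_div_eq_of_eq_mult) auto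
  have "rsum N q (\<lambda>i. rmul N q (Ft i)
             (Slot N 1 (rmul N q (Xpow N q (- int (?r i * N div n))) z))) {..<length Cs} (l * D) mod q =
      (\<Sum>i<length Cs. rmul N q (Ft i) (Slot N 1 (rmul N q (Xpow N q (- int (?r i * D))) z)) (l * D)) mod q"
    unfolding ND using N l by (intro rsum_mod_eq) simp
  also have "\<dots> = (\<Sum>i<length Cs. \<lfloor>(Fbar - S_mat n) $$ (l, ?r i)\<rfloor> * v $ ?r i) mod q"
  proof (rule sum_mod_cong)
    fix i assume "i \<in> {..<length Cs}"
    then have r: "?r i < n" using rcf_block_start_less[OF rcf Fbar] by simp
    have "map_vec floor (col (Fbar - S_mat n) (?r i)) $ l = \<lfloor>(Fbar - S_mat n) $$ (l, ?r i)\<rfloor>"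
      using Fbar l r by (simp add: S_mat_def)
    then have "rmul N q (Ft i) (Slot N 1 (rmul N q (Xpow N q (- int (?r i * D))) z)) (l * D) mod q
        = \<lfloor>(Fbar - S_mat n) $$ (l, ?r i)\<rfloor> * z (?r i * D) mod q"
      unfolding Ft using feedback_term_slot_cong[OF N(1,3) l r] by simp
    also have "\<dots> = \<lfloor>(Fbar - S_mat n) $$ (l, ?r i)\<rfloor> * v $ ?r i mod q"
      using slots[OF r] by (metis mod_mult_right_eq)
    finally show "rmul N q (Ft i) (Slot N 1 (rmul N q (Xpow N q (- int (?r i * D))) z)) (l * D) mod q
        = \<lfloor>(Fbar - S_mat n) $$ (l, ?r i)\<rfloor> * v $ ?r i mod q" .
  qed
  finally show ?thesis .
qed

lemma ring_step_slot_cong: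
  fixes Fi Gb :: "int mat" and v yb :: "int vec"
  assumes N: "N = n * D" "0 < n" "0 < D" "p \<le> D"
    and rcf: "rcf_blocks Fbar Cs" and Fbar: "Fbar \<in> carrier_mat n n" and Fi: "map_mat of_int Fi = Fbar"
    and Gb: "Gb \<in> carrier_mat n p" and yb: "yb \<in> carrier_vec p" and v: "v \<in> carrier_vec n"
    and Ft: "\<And>i. Ft i = Pack N n q (map_vec floor (col (Fbar - S_mat n) (block_start Cs i)))"
    and Gt: "Gt = rsum N q (\<lambda>i. rmul N q
                      (rsum N q (\<lambda>j. rmul N q (rconst N q (Gb $$ (i, j))) (Xpow N q (- int j))) {..<p})
                      (Xpow N q (int (i * N div n)))) {..<n}"
    and yt: "yt = rsum N q (\<lambda>j. rmul N q (rconst N q (yb $ j)) (Xpow N q (int j))) {..<p}"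
    and slots: "\<And>j. j < n \<Longrightarrow> z (j * D) mod q = v $ j mod q"
    and l: "l < n"
  shows "radd N q (radd N q
         (rsum N q (\<lambda>i. rmul N q (Ft i)
             (Slot N 1 (rmul N q (Xpow N q (- int (block_start Cs i * N div n))) z)))
           {..<length Cs})
         (rmul N q (Xpow N q (- int (N div n))) z))
         (rmul N q Gt yt) (l * D) mod q = (Fi *\<^sub>v v + Gb *\<^sub>v yb) $ l mod q"
  (is "radd N q (radd N q ?feedback ?rotation) _ (l * D) mod q = _")
proof -
  let ?r = "block_start Cs"
  have lD: "l * D < N" using N l by simp
  have rotation: "?rotation (l * D) mod q = (if l + 1 < n then v $ (l + 1) else - v $ 0) mod q"
    using rotation_slot_cong[OF N(1,3) l, of q z] mult_div_eq_of_eq_mult[OF N(1,2), of 1]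
      slots[of "l + 1"] slots[of 0] N(2)
    by (auto intro: mod_minus_cong)
  have "(Gb *\<^sub>v yb) $ l = (\<Sum>j<p. Gb $$ (l, j) * yb $ j)"
    using Gb yb l by (simp add: scalar_prod_def lessThan_atLeast0 ac_simps)
  then have input: "rmul N q Gt yt (l * D) mod q = (Gb *\<^sub>v yb) $ l mod q"
    unfolding Gt yt using input_term_slot_cong[OF N(1,3,4) l, of q "\<lambda>i j. Gb $$ (i, j)" "\<lambda>j. yb $ j"]
    by simp
  have "radd N q (radd N q ?feedback ?rotation) (rmul N q Gt yt) (l * D) mod q
      = (radd N q ?feedback ?rotation (l * D) + rmul N q Gt yt (l * D)) mod q"
    using lD by (rule radd_mod_eq)
  also have "\<dots> = ((?feedback (l * D) + ?rotation (l * D)) + rmul N q Gt yt (l * D)) mod q"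
    using radd_mod_eq[OF lD, of q ?feedback ?rotation] by (intro mod_add_cong) auto
  also have "\<dots> = ((\<Sum>i<length Cs. \<lfloor>(Fbar - S_mat n) $$ (l, ?r i)\<rfloor> * v $ ?r i)
      + (if l + 1 < n then v $ (l + 1) else - v $ 0) + (Gb *\<^sub>v yb) $ l) mod q"
    using feedback_slot_cong[OF N(1-3) rcf Fbar Ft slots l] rotation input by (intro mod_add_cong) auto
  also have "\<dots> = (Fi *\<^sub>v v + Gb *\<^sub>v yb) $ l mod q"
    using int_rcf_row_expansion[OF rcf Fbar Fi v l] Gb l by simp
  finally show ?thesis .
qed

lemma ring_state_slots_cong:
  fixes Fi Gb :: "int mat" and z yb :: "nat \<Rightarrow> int vec"
  assumes N: "N = n * D" "0 < n" "0 < D" "p \<le> D"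
    and rcf: "rcf_blocks Fbar Cs" and Fbar: "Fbar \<in> carrier_mat n n" and Fi: "map_mat of_int Fi = Fbar"
    and Gb: "Gb \<in> carrier_mat n p" and yb: "\<And>t. yb t \<in> carrier_vec p" and z: "\<And>t. z t \<in> carrier_vec n"
    and Ft: "\<And>i. Ft i = Pack N n q (map_vec floor (col (Fbar - S_mat n) (block_start Cs i)))"
    and Gt: "Gt = rsum N q (\<lambda>i. rmul N q
                      (rsum N q (\<lambda>j. rmul N q (rconst N q (Gb $$ (i, j))) (Xpow N q (- int j))) {..<p})
                      (Xpow N q (int (i * N div n)))) {..<n}"
    and yt: "\<And>t. yt t = rsum N q (\<lambda>j. rmul N q (rconst N q (yb t $ j)) (Xpow N q (int j))) {..<p}"
    and zt_0: "zt 0 = Pack N n q (z 0)"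
    and zt_step: "\<And>t. zt (Suc t) =
       radd N q (radd N q
         (rsum N q (\<lambda>i. rmul N q (Ft i)
             (Slot N 1 (rmul N q (Xpow N q (- int (block_start Cs i * N div n))) (zt t))))
           {..<length Cs})
         (rmul N q (Xpow N q (- int (N div n))) (zt t)))
         (rmul N q Gt (yt t))"
    and z_step: "\<And>t. z (Suc t) = Fi *\<^sub>v z t + Gb *\<^sub>v yb t"
    and j: "j < n"
  shows "zt t (j * D) mod q = z t $ j mod q"
  using j
proof (induction t arbitrary: j)
  case 0
  show ?case unfolding zt_0 using Pack_slot_cong[OF N(1,3) 0] .
next
  case (Suc t)
  show ?case unfolding zt_step z_step
    by (rule ring_step_slot_cong[OF N rcf Fbar Fi Gb yb z Ft Gt yt Suc.IH Suc.prems])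
qed

lemma less_of_SUP_max_less:
  fixes A B :: "nat \<Rightarrow> rat" and q :: int
  assumes "(SUP t. ereal (real_of_rat (max (A t) (B t)))) < ereal (real_of_int q / 2)"
  shows "B t < rat_of_int q / 2"
proof -
  have "ereal (real_of_rat (max (A t) (B t))) < ereal (real_of_int q / 2)"
    using le_less_trans[OF SUP_upper[OF UNIV_I] assms] .
  then have "real_of_rat (max (A t) (B t)) < real_of_rat (rat_of_int q / 2)" by (simp add: of_rat_divide)
  then have "max (A t) (B t) < rat_of_int q / 2" by (simp only: of_rat_less)
  then show ?thesis by simp
qed

lemma Unpack_output_eq:
  fixes Hb :: "int mat" and v :: "int vec"
  assumes N: "N = n * D" "0 < n" "D = \<tau> * E" "0 < E" "m \<le> \<tau>" and q: "0 < q"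
    and Ht: "Ht = rsum N q (\<lambda>i. rmul N q
                      (rsum N q (\<lambda>j. rmul N q (rconst N q (Hb $$ (i, j)))
                                        (Xpow N q (- int (j * N div n)))) {..<n})
                      (Xpow N q (int (i * N div (n * \<tau>))))) {..<m}"
    and Hb: "Hb \<in> carrier_mat m n" and v: "v \<in> carrier_vec n"
    and slots: "\<And>j. j < n \<Longrightarrow> z (j * D) mod q = v $ j mod q"
    and bound: "\<And>l. l < m \<Longrightarrow> - q \<le> 2 * (Hb *\<^sub>v v) $ l" "\<And>l. l < m \<Longrightarrow> 2 * (Hb *\<^sub>v v) $ l < q"
  shows "Unpack N n \<tau> m (rmul N q Ht (Slot N n z)) = Hb *\<^sub>v v"
proof (rule eq_vecI)
  fix l assume "l < dim_vec (Hb *\<^sub>v v)"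
  then have l: "l < m" using Hb by simp
  have \<tau>: "0 < \<tau>" using N l by auto
  have "l * E < \<tau> * E" using N l by simp
  also have "\<dots> \<le> N" using N by simp
  finally have lE: "l * E < N" .
  have idx: "l * N div (n * \<tau>) = l * E" using N \<tau> by (simp add: ac_simps)
  have "rmul N q Ht (Slot N n z) (l * E) mod q = (\<Sum>j<n. Hb $$ (l, j) * z (j * D)) mod q"
    unfolding Ht by (rule output_slot_cong[OF N l])
  also have "\<dots> = (\<Sum>j<n. Hb $$ (l, j) * v $ j) mod q"
    using slots by (intro sum_mod_cong) (metis mod_mult_right_eq lessThan_iff)
  also have "(\<Sum>j<n. Hb $$ (l, j) * v $ j) = (Hb *\<^sub>v v) $ l"
    using Hb v l by (simp add: scalar_prod_def lessThan_atLeast0 ac_simps)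
  finally have "negacyclic_mult N Ht (Slot N n z) (l * E) mod q = (Hb *\<^sub>v v) $ l mod q"
    using lE by (simp add: rmul_eq_cmod_negacyclic_mult)
  then have "cmod q (negacyclic_mult N Ht (Slot N n z) (l * E)) = (Hb *\<^sub>v v) $ l"
    using bound[OF l] by (intro cmod_eq_if_cong[OF q])
  then show "Unpack N n \<tau> m (rmul N q Ht (Slot N n z)) $ l = (Hb *\<^sub>v v) $ l"
    unfolding Unpack_def rmul_eq_cmod_negacyclic_mult using l lE idx by simp
next
  show "dim_vec (Unpack N n \<tau> m (rmul N q Ht (Slot N n z))) = dim_vec (Hb *\<^sub>v v)"
    using Hb by (simp add: Unpack_def)
qed


theorem theorem1:
  fixes n p m N :: nat and q :: int and \<tau> :: nat
    and F :: "int mat" and G :: "rat mat" and H :: "rat mat" and xini :: "rat vec"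
    and y :: "nat \<Rightarrow> rat vec" and x :: "nat \<Rightarrow> rat vec" and u :: "nat \<Rightarrow> rat vec"
    and T Tinv Fbar :: "rat mat" and Cs :: "rat mat list"
    and L s1 s2 :: rat
    and Gb Hb :: "int mat" and zini :: "int vec" and yb :: "nat \<Rightarrow> int vec"
    and zt :: "nat \<Rightarrow> rq"
    and Ft :: "nat \<Rightarrow> rq" and Gt Ht :: rq and yt :: "nat \<Rightarrow> rq" and ut :: "nat \<Rightarrow> rq"
    and u' :: "nat \<Rightarrow> rat vec"
  assumes F_dim: "F \<in> carrier_mat n n"
    and G_dim: "G \<in> carrier_mat n p"
    and H_dim: "H \<in> carrier_mat m n"
    and xini_dim: "xini \<in> carrier_vec n"
    and y_dim: "\<And>t. y t \<in> carrier_vec p"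
    and x_0: "x 0 = xini"
    and x_step: "\<And>t. x (Suc t) = map_mat of_int F *\<^sub>v x t + G *\<^sub>v y t"
    and u_def: "\<And>t. u t = H *\<^sub>v x t"
    and T_dim: "T \<in> carrier_mat n n" and Tinv_dim: "Tinv \<in> carrier_mat n n"
    and T_inv: "T * Tinv = 1\<^sub>m n" "Tinv * T = 1\<^sub>m n"
    and Fbar_def: "Fbar = T * map_mat of_int F * Tinv"
    and rcf: "rcf_blocks Fbar Cs"
    and L_scale: "L \<noteq> 0" "1 / L \<in> \<nat>"
    and s1_scale: "s1 \<noteq> 0" "1 / s1 \<in> \<nat>"
    and s2_scale: "s2 \<noteq> 0" "1 / s2 \<in> \<nat>"
    and Gb_dim: "Gb \<in> carrier_mat n p"
    and Gb_def: "map_mat of_int Gb = (1 / s1) \<cdot>\<^sub>m (T * G)"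
    and Hb_dim: "Hb \<in> carrier_mat m n"
    and Hb_def: "map_mat of_int Hb = (1 / s2) \<cdot>\<^sub>m (H * Tinv)"
    and zini_dim: "zini \<in> carrier_vec n"
    and zini_def: "map_vec of_int zini = (1 / (L * s1)) \<cdot>\<^sub>v (T *\<^sub>v xini)"
    and yb_dim: "\<And>t. yb t \<in> carrier_vec p"
    and yb_def: "\<And>t. map_vec of_int (yb t) = (1 / L) \<cdot>\<^sub>v y t"
    and q_prime: "prime q"
    and N_pow2: "\<exists>k. N = 2 ^ k"
    and n_pow2: "\<exists>k. n = 2 ^ k"
    and n_dvd_N: "n dvd N"
    and np_le_N: "n * p \<le> N"
    and tau_def: "\<tau> = 2 ^ nat \<lceil>log 2 (real m)\<rceil>"
    and tau_le: "\<tau> \<le> N div n"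
    and Ft_def: "\<And>i. Ft i = Pack N n q (map_vec floor (col (Fbar - S_mat n) (block_start Cs i)))"
    and Gt_def: "Gt = rsum N q (\<lambda>i. rmul N q
                      (rsum N q (\<lambda>j. rmul N q (rconst N q (Gb $$ (i, j))) (Xpow N q (- int j))) {..<p})
                      (Xpow N q (int (i * N div n)))) {..<n}"
    and yt_def: "\<And>t. yt t = rsum N q (\<lambda>j. rmul N q (rconst N q (yb t $ j)) (Xpow N q (int j))) {..<p}"
    and Ht_def: "Ht = rsum N q (\<lambda>i. rmul N q
                      (rsum N q (\<lambda>j. rmul N q (rconst N q (Hb $$ (i, j)))
                                        (Xpow N q (- int (j * N div n)))) {..<n})
                      (Xpow N q (int (i * N div (n * \<tau>))))) {..<m}"
    and zt_0: "zt 0 = Pack N n q zini"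
    and zt_step: "\<And>t. zt (Suc t) =
       radd N q (radd N q
         (rsum N q (\<lambda>i. rmul N q (Ft i)
             (Slot N 1 (rmul N q (Xpow N q (- int (block_start Cs i * N div n))) (zt t))))
           {..<length Cs})
         (rmul N q (Xpow N q (- int (N div n))) (zt t)))
         (rmul N q Gt (yt t))"
    and ut_def: "\<And>t. ut t = rmul N q Ht (Slot N n (zt t))"
    and u'_def: "\<And>t. u' t = (L * s1 * s2) \<cdot>\<^sub>v map_vec of_int (Unpack N n \<tau> m (ut t))"
    and bound: "(SUP t. ereal (real_of_rat (max (vnorm_inf ((1 / (L * s1)) \<cdot>\<^sub>v (T *\<^sub>v x t)))
                                          (vnorm_inf ((1 / (L * s1 * s2)) \<cdot>\<^sub>v u t)))))
                < ereal (real_of_int q / 2)"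
  shows "\<forall>t. u' t = u t"
proof -
  have q: "0 < q" using q_prime by (simp add: prime_gt_0_int)
  obtain D E where N: "N = n * D" "0 < n" "D = \<tau> * E" "0 < D" "0 < E" "p \<le> D" "m \<le> \<tau>"
    using packing_layout[OF N_pow2 n_pow2 n_dvd_N np_le_N tau_def tau_le] by blast
  have Fbar: "Fbar \<in> carrier_mat n n" unfolding Fbar_def using F_dim T_dim Tinv_dim by simp
  obtain Fi where Fi: "Fi \<in> carrier_mat n n" "map_mat of_int Fi = Fbar"
    using similar_rcf_int_mat[OF F_dim T_dim Tinv_dim T_inv rcf[unfolded Fbar_def]] Fbar_def by blast
  define z where "z = rec_nat zini (\<lambda>t z. Fi *\<^sub>v z + Gb *\<^sub>v yb t)"
  have z_step: "z (Suc t) = Fi *\<^sub>v z t + Gb *\<^sub>v yb t" for t unfolding z_def by simp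
  have z_dim: "z t \<in> carrier_vec n" for t
    by (induction t) (use zini_dim Fi Gb_dim yb_dim z_step in \<open>auto simp: z_def\<close>)
  have x_dim: "x t \<in> carrier_vec n" for t
    by (induction t) (use x_0 xini_dim x_step F_dim G_dim y_dim in auto)
  have z_x: "map_vec of_int (z t) = (1 / (L * s1)) \<cdot>\<^sub>v (T *\<^sub>v x t)" for t
    by (rule scaled_similar_trajectory[where x = x and y = y and yb = yb and z = z,
          OF F_dim G_dim T_dim Tinv_dim T_inv(2) Fi(1) Fi(2)[unfolded Fbar_def]
          Gb_dim Gb_def y_dim yb_dim yb_def _ x_step z_dim _ z_step])
      (simp_all add: x_0 xini_dim z_def zini_def)
  have u_z: "map_vec of_int (Hb *\<^sub>v z t) = (1 / (L * s1 * s2)) \<cdot>\<^sub>v u t" for t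
    using scaled_output[OF H_dim T_dim Tinv_dim T_inv(2) Hb_dim Hb_def x_dim z_dim z_x] by (simp add: u_def)
  have slots: "zt t (j * D) mod q = z t $ j mod q" if "j < n" for t j
    by (rule ring_state_slots_cong[where zt = zt and z = z and yb = yb and yt = yt,
          OF N(1,2,4,6) rcf Fbar Fi(2) Gb_dim yb_dim z_dim Ft_def Gt_def yt_def _ zt_step z_step that])
      (simp add: zt_0 z_def)
  show ?thesis
  proof
    fix t
    have "vnorm_inf ((1 / (L * s1 * s2)) \<cdot>\<^sub>v u t) < rat_of_int q / 2"
      by (rule less_of_SUP_max_less[OF bound])
    then have "Unpack N n \<tau> m (ut t) = Hb *\<^sub>v z t"
      unfolding ut_def using int_vec_entry_bound[OF u_z] Hb_dim
      by (intro Unpack_output_eq[OF N(1-3,5,7) q Ht_def Hb_dim z_dim slots]) auto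
    then show "u' t = u t" using L_scale(1) s1_scale(1) s2_scale(1) by (simp add: u'_def u_z smult_smult_assoc)
  qed
qed

end
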